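(* Let $S\subset\{1,\dots,d\}$ and let $y_{S^c}=(y_j)_{j\in S^c}$ be a vector with finite positive entries. Then there exists a unique $u_S(y_{S^c})\in V_S$ such that $$\sum_{j\in S^c} y_j\int_{\Omega_j}\nabla u_S(y_{S^c})\cdot\nabla v\,dx=\langle f,v\rangle_{H^{-1},H^1_0}\quad\text{for all } v\in V_S.$$ Moreover, $u(y_S,y_{S^c})\to u_S(y_{S^c})$ strongly in $H^1_0(\Omega)$ when $y_{S^c}$ is held fixed and $y_j\to\infty$ for all $j\in S$.
   Context: Let $\Omega\subset\mathbb R^m$ be a bounded open domain, partitioned into disjoint open subdomains $\Omega_1,\dots,\Omega_d$ whose closures cover $\overline\Omega$. Equip $H^1_0(\Omega)$ with the norm $\|v\|_{H^1_0}=\|\nabla v\|_{L^2(\Omega)}$. Let $f\in H^{-1}(\Omega)$. For $y=(y_1,\dots,y_d)\in Y:=\,]0,\infty[^d$, let $u(y)\in H^1_0(\Omega)$ be the unique solution of $$\sum_{j=1}^d y_j\int_{\Omega_j}\nabla u(y)\cdot\nabla v\,dx=\langle f,v\rangle_{H^{-1},H^1_0}\quad\text{for all } v\in H^1_0(\Omega),$$ that is, the solution of $-\mathrm{div}(a(y)\nabla u)=f$ with $u=0$ on $\partial\Omega$ and $a(y)=\sum_j y_j\chi_{\Omega_j}$. For $S\subset\{1,\dots,d\}$, set $S^c=\{1,\dots,d\}\setminus S$, write $y=(y_S,y_{S^c})$ with $y_S=(y_j)_{j\in S}$ and $y_{S^c}=(y_j)_{j\in S^c}$, and define the closed subspace $V_S:=\{v\in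 H^1_0(\Omega):\nabla v|_{\Omega_j}=0 \text{ for all } j\in S\}$. *)

theory Defs
  imports "HOL-Analysis.Analysis"
begin

definition L2 :: "('a::euclidean_space \<Rightarrow> 'b::euclidean_space) \<Rightarrow> bool" where
  "L2 f \<longleftrightarrow> f \<in> borel_measurable lebesgue \<and> integrable lebesgue (\<lambda>x. (norm (f x))\<^sup>2)"

definition L2norm :: "('a::euclidean_space \<Rightarrow> 'b::euclidean_space) \<Rightarrow> real" where
  "L2norm f = sqrt (\<integral>x. (norm (f x))\<^sup>2 \<partial>lebesgue)"

definition C1c :: "'a::euclidean_space set \<Rightarrow> ('a \<Rightarrow> real) \<Rightarrow> ('a \<Rightarrow> 'a) \<Rightarrow> bool" where
  "C1c \<Omega> \<phi> G \<longleftrightarrow> (\<forall>x. (\<phi> has_derivative (\<lambda>h. G x \<bullet> h)) (at x)) \<and> continuous_on UNIV G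
     \<and> compact (closure {x. \<phi> x \<noteq> 0}) \<and> closure {x. \<phi> x \<noteq> 0} \<subseteq> \<Omega>"

text \<open>H01 \<Omega> v g: v belongs to H^1_0(\<Omega>) (closure of C^1_c(\<Omega>) in the H^1 norm)
  and g is its weak gradient.\<close>
definition H01 :: "'a::euclidean_space set \<Rightarrow> ('a \<Rightarrow> real) \<Rightarrow> ('a \<Rightarrow> 'a) \<Rightarrow> bool" where
  "H01 \<Omega> v g \<longleftrightarrow> L2 v \<and> L2 g \<and>
     (\<exists>\<phi> G. (\<forall>n. C1c \<Omega> (\<phi> n) (G n)) \<and>
        (\<lambda>n. L2norm (\<lambda>x. \<phi> n x - v x)) \<longlonglongrightarrow> 0 \<and>
        (\<lambda>n. L2norm (\<lambda>x. G n x - g x)) \<longlonglongrightarrow> 0)"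

definition Hminus1 :: "'a::euclidean_space set \<Rightarrow> (('a \<Rightarrow> real) \<Rightarrow> real) \<Rightarrow> bool" where
  "Hminus1 \<Omega> F \<longleftrightarrow>
     (\<forall>v g w h. H01 \<Omega> v g \<longrightarrow> H01 \<Omega> w h \<longrightarrow> F (\<lambda>x. v x + w x) = F v + F w) \<and>
     (\<forall>v g c. H01 \<Omega> v g \<longrightarrow> F (\<lambda>x. c * v x) = c * F v) \<and>
     (\<exists>C. \<forall>v g. H01 \<Omega> v g \<longrightarrow> \<bar>F v\<bar> \<le> C * L2norm g)"

definition VS :: "(nat \<Rightarrow> 'a::euclidean_space set) \<Rightarrow> nat set \<Rightarrow> ('a \<Rightarrow> 'a) \<Rightarrow> bool" where
  "VS Om S g \<longleftrightarrow> (\<forall>j\<in>S. AE x in lebesgue. x \<in> Om j \<longrightarrow> g x = 0)"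

end

theory Submission
  imports Defs
begin

text \<open>
  Let a_y(g, h) = \<Sum>_j y_j \<integral>_{\<Omega>_j} g \<cdot> h (form y g h below) be the form with coefficients y.
  Testing the equation for u(y) with u(y) itself shows that the energy F(u(y)) = a_y(\<nabla>u(y), \<nabla>u(y))
  is nonnegative, and testing the equations for u(y) and u(y') with each other shows that for
  y \<le> y' the energy drops by at least a_y(\<nabla>u(y') - \<nabla>u(y), \<nabla>u(y') - \<nabla>u(y)). With the
  coefficients off S fixed and those on S larger than 1, a_y dominates a fixed multiple of the
  squared L2 norm, so as the energies approach their infimum the gradients form a Cauchy net when
  y_j \<rightarrow> \<infinity> for j \<in> S. Completeness of L2 and the Poincare inequality produce the limit in
  H^1_0. Its gradient vanishes on \<Omega>_j for j \<in> S, because y_j \<integral>_{\<Omega>_j} |\<nabla>u(y)|^2 is bounded by the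
  energy; passing to the limit in the equations tested with functions of V_S gives the limit
  problem, and coercivity of its form on V_S gives uniqueness.
\<close>

section \<open>Square-integrable functions\<close>

lemma L2_add:
  fixes f g :: "'a::euclidean_space \<Rightarrow> 'b::euclidean_space"
  assumes "L2 f" "L2 g" shows "L2 (\<lambda>x. f x + g x)"
proof -
  have [measurable]: "f \<in> borel_measurable lebesgue" "g \<in> borel_measurable lebesgue"
    using assms by (auto simp: L2_def)
  have "integrable lebesgue (\<lambda>x. 2 * (norm (f x))\<^sup>2 + 2 * (norm (g x))\<^sup>2)"
    using assms by (simp add: L2_def)
  moreover have "(\<lambda>x. (norm (f x + g x))\<^sup>2) \<in> borel_measurable lebesgue" by measurable
  moreover have "AE x in lebesgue. norm ((norm (f x + g x))\<^sup>2) \<le> norm (2 * (norm (f x))\<^sup>2 + 2 * (norm (g x))\<^sup>2)"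
  proof (intro AE_I2)
    fix x
    have "(norm (f x + g x))\<^sup>2 \<le> (norm (f x) + norm (g x))\<^sup>2"
      by (simp add: norm_triangle_ineq power_mono)
    also have "\<dots> \<le> 2 * (norm (f x))\<^sup>2 + 2 * (norm (g x))\<^sup>2"
      using zero_le_power2[of "norm (f x) - norm (g x)"] by (simp add: power2_eq_square algebra_simps)
    finally show "norm ((norm (f x + g x))\<^sup>2) \<le> norm (2 * (norm (f x))\<^sup>2 + 2 * (norm (g x))\<^sup>2)" by simp
  qed
  ultimately have "integrable lebesgue (\<lambda>x. (norm (f x + g x))\<^sup>2)"
    by (rule Bochner_Integration.integrable_bound)
  moreover have "(\<lambda>x. f x + g x) \<in> borel_measurable lebesgue" by measurable
  ultimately show ?thesis by (simp add: L2_def)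
qed

lemma L2_scaleR:
  fixes f :: "'a::euclidean_space \<Rightarrow> 'b::euclidean_space"
  assumes "L2 f" shows "L2 (\<lambda>x. c *\<^sub>R f x)"
proof -
  have [measurable]: "f \<in> borel_measurable lebesgue" using assms by (auto simp: L2_def)
  have "integrable lebesgue (\<lambda>x. c\<^sup>2 * (norm (f x))\<^sup>2)" using assms by (simp add: L2_def)
  moreover have "(\<lambda>x. c *\<^sub>R f x) \<in> borel_measurable lebesgue" by measurable
  ultimately show ?thesis by (simp add: L2_def power_mult_distrib)
qed

lemma L2_diff:
  fixes f g :: "'a::euclidean_space \<Rightarrow> 'b::euclidean_space"
  assumes "L2 f" "L2 g" shows "L2 (\<lambda>x. f x - g x)"
  using L2_add[OF assms(1) L2_scaleR[OF assms(2), of "-1"]] by simp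

lemma L2_zero: "L2 (\<lambda>x::'a::euclidean_space. 0::'b::euclidean_space)"
  by (simp add: L2_def)

lemma L2_indicator:
  fixes f :: "'a::euclidean_space \<Rightarrow> 'b::euclidean_space"
  assumes "L2 f" "A \<in> sets lebesgue" shows "L2 (\<lambda>x. indicator A x *\<^sub>R f x)"
proof -
  have [measurable]: "f \<in> borel_measurable lebesgue" "A \<in> sets lebesgue"
    using assms by (auto simp: L2_def)
  have "integrable lebesgue (\<lambda>x. (norm (f x))\<^sup>2)" using assms by (simp add: L2_def)
  moreover have "(\<lambda>x. (norm (indicator A x *\<^sub>R f x))\<^sup>2) \<in> borel_measurable lebesgue" by measurable
  moreover have "AE x in lebesgue. norm ((norm (indicator A x *\<^sub>R f x))\<^sup>2) \<le> norm ((norm (f x))\<^sup>2)"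
    by (intro AE_I2) (simp add: indicator_def)
  ultimately have "integrable lebesgue (\<lambda>x. (norm (indicator A x *\<^sub>R f x))\<^sup>2)"
    by (rule Bochner_Integration.integrable_bound)
  moreover have "(\<lambda>x. indicator A x *\<^sub>R f x) \<in> borel_measurable lebesgue" by measurable
  ultimately show ?thesis by (simp add: L2_def)
qed

lemma integrable_inner_L2:
  fixes f g :: "'a::euclidean_space \<Rightarrow> 'b::euclidean_space"
  assumes "L2 f" "L2 g" shows "integrable lebesgue (\<lambda>x. f x \<bullet> g x)"
proof -
  have [measurable]: "f \<in> borel_measurable lebesgue" "g \<in> borel_measurable lebesgue"
    using assms by (auto simp: L2_def)
  have "integrable lebesgue (\<lambda>x. (norm (f x))\<^sup>2 + (norm (g x))\<^sup>2)"
    using assms by (simp add: L2_def)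
  moreover have "(\<lambda>x. f x \<bullet> g x) \<in> borel_measurable lebesgue" by measurable
  moreover have "AE x in lebesgue. norm (f x \<bullet> g x) \<le> norm ((norm (f x))\<^sup>2 + (norm (g x))\<^sup>2)"
  proof (intro AE_I2)
    fix x
    have "\<bar>f x \<bullet> g x\<bar> \<le> norm (f x) * norm (g x)" by (rule Cauchy_Schwarz_ineq2)
    also have "\<dots> \<le> (norm (f x))\<^sup>2 + (norm (g x))\<^sup>2"
      by (smt (verit) norm_ge_zero power2_eq_square mult_mono sum_squares_bound)
    finally show "norm (f x \<bullet> g x) \<le> norm ((norm (f x))\<^sup>2 + (norm (g x))\<^sup>2)" by simp
  qed
  ultimately show ?thesis by (rule Bochner_Integration.integrable_bound)
qed

lemma set_integrable_inner_L2:
  fixes f g :: "'a::euclidean_space \<Rightarrow> 'b::euclidean_space"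
  assumes "L2 f" "L2 g" "A \<in> sets lebesgue"
  shows "set_integrable lebesgue A (\<lambda>x. f x \<bullet> g x)"
  unfolding set_integrable_def by (rule integrable_mult_indicator[OF assms(3) integrable_inner_L2[OF assms(1,2)]])

definition L2sq :: "('a::euclidean_space \<Rightarrow> 'b::euclidean_space) \<Rightarrow> real" where
  "L2sq f = (\<integral>x. (norm (f x))\<^sup>2 \<partial>lebesgue)"

lemma L2sq_nonneg: "L2sq f \<ge> 0"
  unfolding L2sq_def by (intro integral_nonneg_AE) auto

lemma L2norm_eq_sqrt_L2sq: "L2norm f = sqrt (L2sq f)"
  by (simp add: L2norm_def L2sq_def)

lemma L2norm_nonneg: "L2norm f \<ge> 0"
  by (simp add: L2norm_def)

lemma power2_L2norm: "(L2norm f)\<^sup>2 = L2sq f"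
  using L2sq_nonneg by (simp add: L2norm_eq_sqrt_L2sq)

lemma L2sq_eq_inner_integral: "L2sq f = (\<integral>x. f x \<bullet> f x \<partial>lebesgue)"
  by (simp add: L2sq_def power2_norm_eq_inner)

lemma nn_integral_eq_L2sq:
  fixes f :: "'a::euclidean_space \<Rightarrow> 'b::euclidean_space"
  assumes "L2 f" shows "(\<integral>\<^sup>+x. ennreal ((norm (f x))\<^sup>2) \<partial>lebesgue) = ennreal (L2sq f)"
  unfolding L2sq_def by (rule nn_integral_eq_integral) (use assms in \<open>auto simp: L2_def\<close>)

lemma AE_zero_if_L2norm_le_0:
  fixes f :: "'a::euclidean_space \<Rightarrow> 'b::euclidean_space"
  assumes "L2 f" "L2norm f \<le> 0" shows "AE x in lebesgue. f x = 0"
proof -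
  have "L2sq f = 0" using assms(2) L2sq_nonneg[of f] by (simp add: L2norm_eq_sqrt_L2sq)
  hence "AE x in lebesgue. (norm (f x))\<^sup>2 = 0"
    using assms(1) integral_nonneg_eq_0_iff_AE[of lebesgue "\<lambda>x. (norm (f x))\<^sup>2"]
    by (simp add: L2_def L2sq_def)
  thus ?thesis by simp
qed

lemma L2sq_add:
  fixes f g :: "'a::euclidean_space \<Rightarrow> 'b::euclidean_space"
  assumes "L2 f" "L2 g"
  shows "L2sq (\<lambda>x. f x + g x) = L2sq f + 2 * (\<integral>x. f x \<bullet> g x \<partial>lebesgue) + L2sq g"
proof -
  have "L2sq (\<lambda>x. f x + g x) = (\<integral>x. (norm (f x))\<^sup>2 + 2 * (f x \<bullet> g x) + (norm (g x))\<^sup>2 \<partial>lebesgue)"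
    unfolding L2sq_def by (intro Bochner_Integration.integral_cong refl)
      (simp add: power2_norm_eq_inner inner_add inner_commute)
  also have "\<dots> = L2sq f + 2 * (\<integral>x. f x \<bullet> g x \<partial>lebesgue) + L2sq g"
    using assms integrable_inner_L2[OF assms] by (simp add: L2sq_def L2_def)
  finally show ?thesis .
qed

lemma Cauchy_Schwarz_L2:
  fixes f g :: "'a::euclidean_space \<Rightarrow> 'b::euclidean_space"
  assumes f: "L2 f" and g: "L2 g"
  shows "\<bar>\<integral>x. f x \<bullet> g x \<partial>lebesgue\<bar> \<le> L2norm f * L2norm g"
proof -
  have iA: "integrable lebesgue (\<lambda>x. (norm (f x))\<^sup>2)" and iB: "integrable lebesgue (\<lambda>x. (norm (g x))\<^sup>2)"
    using f g by (auto simp: L2_def)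
  \<comment> \<open>Integrating the weighted AM-GM bound and optimising the weight t.\<close>
  have weighted: "\<bar>\<integral>x. f x \<bullet> g x \<partial>lebesgue\<bar> \<le> (t * L2sq f + L2sq g / t) / 2" if t: "t > 0" for t
  proof -
    have pw: "\<bar>f x \<bullet> g x\<bar> \<le> (t * (norm (f x))\<^sup>2 + (norm (g x))\<^sup>2 / t) / 2" for x
    proof -
      have "0 \<le> (t * norm (f x) - norm (g x))\<^sup>2 / t" using t by simp
      also have "\<dots> = t * (norm (f x))\<^sup>2 - 2 * (norm (f x) * norm (g x)) + (norm (g x))\<^sup>2 / t"
        using t by (simp add: power2_eq_square field_simps)
      finally have "norm (f x) * norm (g x) \<le> (t * (norm (f x))\<^sup>2 + (norm (g x))\<^sup>2 / t) / 2"
        by simp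
      thus ?thesis using Cauchy_Schwarz_ineq2[of "f x" "g x"] by linarith
    qed
    have "\<bar>\<integral>x. f x \<bullet> g x \<partial>lebesgue\<bar> \<le> (\<integral>x. \<bar>f x \<bullet> g x\<bar> \<partial>lebesgue)"
      by (rule integral_abs_bound)
    also have "\<dots> \<le> (\<integral>x. (t * (norm (f x))\<^sup>2 + (norm (g x))\<^sup>2 / t) / 2 \<partial>lebesgue)"
      using pw iA iB integrable_inner_L2[OF f g] by (intro integral_mono) auto
    also have "\<dots> = (t * L2sq f + L2sq g / t) / 2"
      using iA iB by (simp add: L2sq_def)
    finally show ?thesis .
  qed
  show ?thesis
  proof (cases "L2sq f = 0 \<or> L2sq g = 0")
    case True
    hence "AE x in lebesgue. f x \<bullet> g x = 0"
      using AE_zero_if_L2norm_le_0[OF f] AE_zero_if_L2norm_le_0[OF g]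
      by (auto simp: L2norm_eq_sqrt_L2sq elim: AE_mp)
    hence "(\<integral>x. f x \<bullet> g x \<partial>lebesgue) = 0" by (rule integral_eq_zero_AE)
    thus ?thesis by (simp add: L2norm_nonneg)
  next
    case False
    hence A: "L2sq f > 0" and B: "L2sq g > 0" using L2sq_nonneg[of f] L2sq_nonneg[of g] by auto
    define t where "t = sqrt (L2sq g) / sqrt (L2sq f)"
    have "(t * L2sq f + L2sq g / t) / 2 = sqrt (L2sq f) * sqrt (L2sq g)"
      using A B unfolding t_def by (simp add: field_simps)
    with weighted[of t] A B show ?thesis by (simp add: L2norm_eq_sqrt_L2sq t_def)
  qed
qed

lemma L2norm_triangle:
  fixes f g :: "'a::euclidean_space \<Rightarrow> 'b::euclidean_space"
  assumes "L2 f" "L2 g"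
  shows "L2norm (\<lambda>x. f x + g x) \<le> L2norm f + L2norm g"
proof -
  have "L2sq (\<lambda>x. f x + g x) \<le> (L2norm f + L2norm g)\<^sup>2"
    using L2sq_add[OF assms] Cauchy_Schwarz_L2[OF assms]
    by (simp add: power2_sum power2_L2norm)
  hence "sqrt (L2sq (\<lambda>x. f x + g x)) \<le> L2norm f + L2norm g"
    using L2norm_nonneg[of f] L2norm_nonneg[of g] by (intro real_le_lsqrt) auto
  thus ?thesis by (simp add: L2norm_eq_sqrt_L2sq)
qed

lemma L2norm_scaleR: "L2norm (\<lambda>x. c *\<^sub>R f x) = \<bar>c\<bar> * L2norm f"
  by (simp add: L2norm_def power_mult_distrib real_sqrt_mult)

lemma L2norm_minus_commute: "L2norm (\<lambda>x. f x - g x) = L2norm (\<lambda>x. g x - f x)"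
  by (simp add: L2norm_def norm_minus_commute)

lemma L2norm_diff_triangle:
  fixes f g h :: "'a::euclidean_space \<Rightarrow> 'b::euclidean_space"
  assumes "L2 f" "L2 g" "L2 h"
  shows "L2norm (\<lambda>x. f x - h x) \<le> L2norm (\<lambda>x. f x - g x) + L2norm (\<lambda>x. g x - h x)"
  using L2norm_triangle[OF L2_diff[OF assms(1,2)] L2_diff[OF assms(2,3)]] by simp

lemma L2norm_indicator_le:
  fixes f :: "'a::euclidean_space \<Rightarrow> 'b::euclidean_space"
  assumes "L2 f" "A \<in> sets lebesgue"
  shows "L2norm (\<lambda>x. indicator A x *\<^sub>R f x) \<le> L2norm f"
proof -
  have "L2sq (\<lambda>x. indicator A x *\<^sub>R f x) \<le> L2sq f"
    unfolding L2sq_def using L2_indicator[OF assms] assms(1)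
    by (intro integral_mono) (auto simp: indicator_def L2_def)
  thus ?thesis by (simp add: L2norm_eq_sqrt_L2sq)
qed

lemma L2sq_indicator: "L2sq (\<lambda>x. indicator A x *\<^sub>R f x) = (LINT x:A|lebesgue. f x \<bullet> f x)"
  unfolding L2sq_def set_lebesgue_integral_def
  by (intro Bochner_Integration.integral_cong refl) (auto simp: indicator_def power2_norm_eq_inner)

lemma set_integral_inner_bound:
  fixes f g :: "'a::euclidean_space \<Rightarrow> 'b::euclidean_space"
  assumes f: "L2 f" and g: "L2 g" and A: "A \<in> sets lebesgue"
  shows "\<bar>LINT x:A|lebesgue. f x \<bullet> g x\<bar> \<le> L2norm f * L2norm g"
proof -
  have "(LINT x:A|lebesgue. f x \<bullet> g x) = (\<integral>x. (indicator A x *\<^sub>R f x) \<bullet> g x \<partial>lebesgue)"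
    by (simp add: set_lebesgue_integral_def)
  also have "\<bar>\<dots>\<bar> \<le> L2norm (\<lambda>x. indicator A x *\<^sub>R f x) * L2norm g"
    by (rule Cauchy_Schwarz_L2[OF L2_indicator[OF f A] g])
  also have "\<dots> \<le> L2norm f * L2norm g"
    by (intro mult_right_mono L2norm_indicator_le f A L2norm_nonneg)
  finally show ?thesis .
qed

lemma set_integral_inner_self_nonneg: "(LINT x:A|lebesgue. (f x::'b::euclidean_space) \<bullet> f x) \<ge> 0"
  unfolding set_lebesgue_integral_def by (intro integral_nonneg_AE) (auto simp: indicator_def)

section \<open>Completeness of L2\<close>

lemma convergent_if_summable_weighted_diff:
  fixes a :: "nat \<Rightarrow> 'b::banach"
  assumes "summable (\<lambda>k. 2^k * (norm (a (Suc k) - a k))\<^sup>2)"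
  shows "convergent a"
proof -
  \<comment> \<open>AM-GM: the increments are bounded by (2^k |a_(k+1) - a_k|^2 + 2^-k) / 2.\<close>
  have bound: "norm (norm (a (Suc k) - a k)) \<le> (2^k * (norm (a (Suc k) - a k))\<^sup>2 + (1/2)^k) / 2" for k
  proof -
    define t :: real where "t = 2^k"
    have t: "t > 0" by (simp add: t_def)
    have "0 \<le> (t * norm (a (Suc k) - a k) - 1)\<^sup>2 / t" using t by simp
    also have "\<dots> = t * (norm (a (Suc k) - a k))\<^sup>2 - 2 * norm (a (Suc k) - a k) + 1 / t"
      using t by (simp add: power2_eq_square field_simps)
    finally show ?thesis by (simp add: t_def power_one_over)
  qed
  have "summable (\<lambda>k. (2^k * (norm (a (Suc k) - a k))\<^sup>2 + (1/2)^k) / 2)"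
    by (intro summable_divide summable_add assms summable_geometric) auto
  hence "summable (\<lambda>k. norm (a (Suc k) - a k))"
    using bound by (rule summable_comparison_test'[where N = 0])
  hence "summable (\<lambda>k. a (Suc k) - a k)" by (rule summable_norm_cancel)
  hence "convergent (\<lambda>n. a 0 + (\<Sum>k<n. a (Suc k) - a k))"
    by (intro convergent_add convergent_const summable_iff_convergent[THEN iffD1])
  thus ?thesis by (simp add: sum_lessThan_telescope)
qed

lemma AE_convergent_if_L2norm_diff_le:
  fixes f :: "nat \<Rightarrow> 'a::euclidean_space \<Rightarrow> 'b::euclidean_space"
  assumes L: "\<And>k. L2 (f k)" and fast: "\<And>k. L2norm (\<lambda>x. f (Suc k) x - f k x) \<le> (1/4)^k"
  shows "AE x in lebesgue. convergent (\<lambda>k. f k x)"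
proof -
  define D where "D k = (\<lambda>x. f (Suc k) x - f k x)" for k
  have LD: "L2 (D k)" for k unfolding D_def by (intro L2_diff L)
  have [measurable]: "D k \<in> borel_measurable lebesgue" for k using LD[of k] by (simp add: L2_def)
  have weighted: "2^k * L2sq (D k) \<le> (1/8)^k" for k
  proof -
    have "L2norm (D k) \<le> (1/4)^k" using fast by (simp add: D_def)
    hence "L2sq (D k) \<le> ((1/4)^k)\<^sup>2" by (simp add: power2_L2norm[symmetric] power_mono L2norm_nonneg)
    also have "\<dots> = (1/16)^k" by (simp add: power2_eq_square flip: power_mult_distrib)
    finally have "2^k * L2sq (D k) \<le> 2^k * (1/16)^k" by simp
    also have "\<dots> = (2 * (1/16))^k" by (simp only: power_mult_distrib)
    finally show ?thesis by simp
  qed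
  define s where "s x = (\<Sum>k. ennreal (2^k * (norm (D k x))\<^sup>2))" for x
  have "(\<integral>\<^sup>+x. s x \<partial>lebesgue) = (\<Sum>k. \<integral>\<^sup>+x. ennreal (2^k) * ennreal ((norm (D k x))\<^sup>2) \<partial>lebesgue)"
    unfolding s_def by (subst nn_integral_suminf) (auto simp: ennreal_mult)
  also have "\<dots> = (\<Sum>k. ennreal (2^k * L2sq (D k)))"
    by (simp add: nn_integral_cmult nn_integral_eq_L2sq[OF LD] ennreal_mult L2sq_nonneg)
  also have "\<dots> \<le> (\<Sum>k. ennreal ((1/8)^k))"
    by (intro suminf_le summableI) (use weighted in \<open>auto intro: ennreal_leI\<close>)
  also have "\<dots> = ennreal (\<Sum>k. (1/8::real)^k)"
    by (intro suminf_ennreal2 summable_geometric) auto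
  finally have "(\<integral>\<^sup>+x. s x \<partial>lebesgue) < \<infinity>" by (simp add: le_less_trans)
  hence "AE x in lebesgue. s x < \<infinity>"
    by (intro finite_nn_integral_imp_ae_finite) (auto simp: s_def)
  thus ?thesis
  proof eventually_elim
    case (elim x)
    hence "summable (\<lambda>k. 2^k * (norm (D k x))\<^sup>2)"
      by (intro summable_suminf_not_top) (auto simp: s_def)
    thus ?case unfolding D_def by (rule convergent_if_summable_weighted_diff)
  qed
qed

lemma L2sq_diff_le_if_AE_limit:
  fixes f :: "nat \<Rightarrow> 'a::euclidean_space \<Rightarrow> 'b::euclidean_space"
  assumes L: "\<And>k. L2 (f k)" and h: "L2 h" and [measurable]: "g \<in> borel_measurable lebesgue"
    and lim: "AE x in lebesgue. (\<lambda>k. f k x) \<longlonglongrightarrow> g x"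
    and bound: "eventually (\<lambda>k. L2sq (\<lambda>x. h x - f k x) \<le> c) sequentially"
  shows "L2 (\<lambda>x. h x - g x) \<and> L2sq (\<lambda>x. h x - g x) \<le> c"
proof -
  have [measurable]: "h \<in> borel_measurable lebesgue" "f k \<in> borel_measurable lebesgue" for k
    using L h by (auto simp: L2_def)
  obtain N where "\<forall>k\<ge>N. L2sq (\<lambda>x. h x - f k x) \<le> c"
    using bound by (auto simp: eventually_sequentially)
  hence c: "c \<ge> 0" using L2sq_nonneg order_trans by blast
  have "(\<integral>\<^sup>+x. ennreal ((norm (h x - g x))\<^sup>2) \<partial>lebesgue)
      = (\<integral>\<^sup>+x. liminf (\<lambda>k. ennreal ((norm (h x - f k x))\<^sup>2)) \<partial>lebesgue)"
    using lim
  proof (intro nn_integral_cong_AE, eventually_elim)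
    case (elim x)
    have "(\<lambda>k. ennreal ((norm (h x - f k x))\<^sup>2)) \<longlonglongrightarrow> ennreal ((norm (h x - g x))\<^sup>2)"
      by (intro tendsto_ennrealI tendsto_power tendsto_norm tendsto_diff tendsto_const elim)
    thus ?case by (metis lim_imp_Liminf trivial_limit_sequentially)
  qed
  also have "\<dots> \<le> liminf (\<lambda>k. \<integral>\<^sup>+x. ennreal ((norm (h x - f k x))\<^sup>2) \<partial>lebesgue)"
    by (rule nn_integral_liminf) measurable
  also have "\<dots> \<le> limsup (\<lambda>k. \<integral>\<^sup>+x. ennreal ((norm (h x - f k x))\<^sup>2) \<partial>lebesgue)"
    by (rule Liminf_le_Limsup) simp
  also have "\<dots> \<le> ennreal c"
    using bound
    by (intro Limsup_bounded, eventually_elim)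
      (simp add: nn_integral_eq_L2sq[OF L2_diff[OF h L]] ennreal_leI)
  finally have nn: "(\<integral>\<^sup>+x. ennreal ((norm (h x - g x))\<^sup>2) \<partial>lebesgue) \<le> ennreal c" .
  have i: "integrable lebesgue (\<lambda>x. (norm (h x - g x))\<^sup>2)"
    by (rule integrableI_bounded) (use nn in \<open>auto simp: top_unique intro: le_less_trans\<close>)
  hence "L2 (\<lambda>x. h x - g x)" by (simp add: L2_def)
  moreover from this have "L2sq (\<lambda>x. h x - g x) \<le> c"
    using nn c by (simp add: nn_integral_eq_L2sq ennreal_le_iff)
  ultimately show ?thesis ..
qed

lemma L2_complete:
  fixes f :: "nat \<Rightarrow> 'a::euclidean_space \<Rightarrow> 'b::euclidean_space"
  assumes L: "\<And>n. L2 (f n)"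
    and Cauchy: "\<And>e. e > 0 \<Longrightarrow> \<exists>N. \<forall>m\<ge>N. \<forall>n\<ge>N. L2norm (\<lambda>x. f m x - f n x) < e"
  shows "\<exists>g. L2 g \<and> (\<lambda>n. L2norm (\<lambda>x. f n x - g x)) \<longlonglongrightarrow> 0"
proof -
  have "\<exists>r. \<forall>n. (\<forall>i\<ge>r n. \<forall>j\<ge>r n. L2norm (\<lambda>x. f i x - f j x) < (1/4)^n) \<and> r n < r (Suc n)"
  proof (intro dependent_nat_choice)
    fix N n
    obtain N' where "\<forall>i\<ge>N'. \<forall>j\<ge>N'. L2norm (\<lambda>x. f i x - f j x) < (1/4)^Suc n"
      using Cauchy[of "(1/4)^Suc n"] by auto
    thus "\<exists>N''. (\<forall>i\<ge>N''. \<forall>j\<ge>N''. L2norm (\<lambda>x. f i x - f j x) < (1/4)^Suc n) \<and> N < N''"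
      by (intro exI[of _ "max N' (Suc N)"]) auto
  qed (use Cauchy[of 1] in auto)
  then obtain r where r: "\<And>n i j. i \<ge> r n \<Longrightarrow> j \<ge> r n \<Longrightarrow> L2norm (\<lambda>x. f i x - f j x) < (1/4)^n"
    and r_Suc: "\<And>n. r n < r (Suc n)" by blast
  have r_mono: "strict_mono r" using r_Suc by (simp add: strict_mono_Suc_iff)
  have "L2norm (\<lambda>x. f (r (Suc k)) x - f (r k) x) \<le> (1/4)^k" for k
    using r[of k "r (Suc k)" "r k"] r_Suc[of k] by simp
  hence "AE x in lebesgue. convergent (\<lambda>k. f (r k) x)"
    by (intro AE_convergent_if_L2norm_diff_le L)
  define g where "g x = lim (\<lambda>k. f (r k) x)" for x
  have g_meas: "g \<in> borel_measurable lebesgue"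
    unfolding g_def by (rule borel_measurable_lim_metric) (use L in \<open>simp add: L2_def\<close>)
  have g_lim: "AE x in lebesgue. (\<lambda>k. f (r k) x) \<longlonglongrightarrow> g x"
    using \<open>AE x in lebesgue. convergent _\<close> by eventually_elim (simp add: g_def convergent_LIMSEQ_iff)
  have close: "L2 (\<lambda>x. f n x - g x) \<and> L2sq (\<lambda>x. f n x - g x) \<le> e\<^sup>2"
    if N: "\<forall>m\<ge>N. \<forall>n\<ge>N. L2norm (\<lambda>x. f m x - f n x) < e" and n: "n \<ge> N" for e N n
  proof (rule L2sq_diff_le_if_AE_limit[OF L L g_meas g_lim])
    show "eventually (\<lambda>k. L2sq (\<lambda>x. f n x - f (r k) x) \<le> e\<^sup>2) sequentially"
    proof (rule eventually_sequentiallyI[of N])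
      fix k assume "k \<ge> N"
      hence "L2norm (\<lambda>x. f n x - f (r k) x) < e"
        using N n strict_mono_imp_increasing[OF r_mono, of k] by auto
      thus "L2sq (\<lambda>x. f n x - f (r k) x) \<le> e\<^sup>2"
        using power_mono[OF less_imp_le L2norm_nonneg, of _ _ 2] by (simp add: power2_L2norm)
    qed
  qed
  obtain N1 where "\<forall>m\<ge>N1. \<forall>n\<ge>N1. L2norm (\<lambda>x. f m x - f n x) < 1" using Cauchy[of 1] by auto
  hence "L2 (\<lambda>x. f N1 x - (f N1 x - g x))" using close L2_diff[OF L] by blast
  hence "L2 g" by simp
  moreover have "(\<lambda>n. L2norm (\<lambda>x. f n x - g x)) \<longlonglongrightarrow> 0"
  proof (rule LIMSEQ_I)
    fix e :: real assume e: "e > 0"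
    obtain N where N: "\<forall>m\<ge>N. \<forall>n\<ge>N. L2norm (\<lambda>x. f m x - f n x) < e/2"
      using Cauchy[of "e/2"] e by auto
    have "norm (L2norm (\<lambda>x. f n x - g x) - 0) < e" if "n \<ge> N" for n
    proof -
      have "L2norm (\<lambda>x. f n x - g x) \<le> e/2"
        using close[OF N that] e unfolding L2norm_eq_sqrt_L2sq by (intro real_le_lsqrt) auto
      thus ?thesis using e by (simp add: abs_of_nonneg L2norm_nonneg)
    qed
    thus "\<exists>N. \<forall>n\<ge>N. norm (L2norm (\<lambda>x. f n x - g x) - 0) < e" by blast
  qed
  ultimately show ?thesis by blast
qed

section \<open>Test functions and H^1_0\<close>

lemma C1c_vanishes_outside_support:
  assumes C: "C1c \<Omega> \<phi> G" and x: "x \<notin> closure {x. \<phi> x \<noteq> 0}"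
  shows "\<phi> x = 0" "G x = 0"
proof -
  let ?U = "- closure {x. \<phi> x \<noteq> 0}"
  have zero: "\<phi> y = 0" if "y \<in> ?U" for y
    using that closure_subset[of "{x. \<phi> x \<noteq> 0}"] by auto
  have U: "open ?U" "x \<in> ?U" using x by auto
  show "\<phi> x = 0" using U(2) by (rule zero)
  have "(\<phi> has_derivative (\<lambda>h. G x \<bullet> h)) (at x)" using C by (simp add: C1c_def)
  hence "((\<lambda>_. 0::real) has_derivative (\<lambda>h. G x \<bullet> h)) (at x)"
    by (rule has_derivative_transform_within_open[OF _ U]) (erule zero)
  moreover have "((\<lambda>_. 0::real) has_derivative (\<lambda>h. 0)) (at x)" by simp
  ultimately have "(\<lambda>h. G x \<bullet> h) = (\<lambda>h. 0)" by (rule has_derivative_unique)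
  hence "G x \<bullet> G x = 0" by (rule fun_cong)
  thus "G x = 0" by simp
qed

lemma C1c_continuous:
  assumes "C1c \<Omega> \<phi> G" shows "continuous_on UNIV \<phi>" "continuous_on UNIV G"
proof -
  have "isCont \<phi> x" for x
    using assms has_derivative_continuous[of \<phi> "\<lambda>h. G x \<bullet> h" x UNIV] by (simp add: C1c_def)
  thus "continuous_on UNIV \<phi>" by (simp add: continuous_on_eq_continuous_at)
  show "continuous_on UNIV G" using assms by (simp add: C1c_def)
qed

lemma L2_if_continuous_compact_support:
  fixes f :: "'a::euclidean_space \<Rightarrow> 'b::euclidean_space"
  assumes c: "continuous_on UNIV f" and K: "compact K" and zero: "\<And>x. x \<notin> K \<Longrightarrow> f x = 0"
  shows "L2 f"
proof -
  have "integrable lborel (\<lambda>x. indicator K x *\<^sub>R (norm (f x))\<^sup>2)"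
    by (rule borel_integrable_compact[OF K]) (intro continuous_intros continuous_on_subset[OF c], simp)
  moreover have "(\<lambda>x. indicator K x *\<^sub>R (norm (f x))\<^sup>2) = (\<lambda>x. (norm (f x))\<^sup>2)"
    using zero by (intro ext) (auto simp: indicator_def)
  ultimately have "integrable lborel (\<lambda>x. (norm (f x))\<^sup>2)" by simp
  hence "integrable lebesgue (\<lambda>x. (norm (f x))\<^sup>2)"
    using integrable_completion[OF borel_measurable_integrable] by blast
  moreover have "f \<in> borel_measurable lebesgue"
    using borel_measurable_continuous_onI[OF c] by (simp add: measurable_completion)
  ultimately show ?thesis by (simp add: L2_def)
qed

lemma C1c_L2:
  assumes "C1c \<Omega> \<phi> G" shows "L2 \<phi>" "L2 G"
proof -
  have K: "compact (closure {x. \<phi> x \<noteq> 0})" using assms by (simp add: C1c_def)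
  show "L2 \<phi>" "L2 G"
    using L2_if_continuous_compact_support[OF C1c_continuous(1)[OF assms] K]
      L2_if_continuous_compact_support[OF C1c_continuous(2)[OF assms] K]
      C1c_vanishes_outside_support[OF assms] by blast+
qed

lemma C1c_lincomb:
  assumes A: "C1c \<Omega> \<phi>1 G1" and B: "C1c \<Omega> \<phi>2 G2"
  shows "C1c \<Omega> (\<lambda>x. a * \<phi>1 x + b * \<phi>2 x) (\<lambda>x. a *\<^sub>R G1 x + b *\<^sub>R G2 x)"
proof -
  let ?K1 = "closure {x. \<phi>1 x \<noteq> 0}" and ?K2 = "closure {x. \<phi>2 x \<noteq> 0}"
  have deriv: "((\<lambda>x. a * \<phi>1 x + b * \<phi>2 x) has_derivative (\<lambda>h. (a *\<^sub>R G1 x + b *\<^sub>R G2 x) \<bullet> h)) (at x)" for x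
  proof -
    have "((\<lambda>x. a * \<phi>1 x + b * \<phi>2 x) has_derivative (\<lambda>h. a * (G1 x \<bullet> h) + b * (G2 x \<bullet> h))) (at x)"
      using A B by (intro has_derivative_add has_derivative_mult_right) (auto simp: C1c_def)
    thus ?thesis by (simp add: inner_add_left)
  qed
  have "{x. a * \<phi>1 x + b * \<phi>2 x \<noteq> 0} \<subseteq> {x. \<phi>1 x \<noteq> 0} \<union> {x. \<phi>2 x \<noteq> 0}" by auto
  from closure_mono[OF this]
  have supp: "closure {x. a * \<phi>1 x + b * \<phi>2 x \<noteq> 0} \<subseteq> ?K1 \<union> ?K2"
    by (simp add: closure_Un)
  have K: "compact (?K1 \<union> ?K2)" "?K1 \<union> ?K2 \<subseteq> \<Omega>" using A B by (auto simp: C1c_def)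
  have "compact (closure {x. a * \<phi>1 x + b * \<phi>2 x \<noteq> 0})"
    using supp K(1) by (meson bounded_subset closed_closure compact_eq_bounded_closed compact_imp_bounded)
  moreover have "continuous_on UNIV (\<lambda>x. a *\<^sub>R G1 x + b *\<^sub>R G2 x)"
    using C1c_continuous(2)[OF A] C1c_continuous(2)[OF B] by (intro continuous_intros)
  ultimately show ?thesis using deriv supp K(2) unfolding C1c_def by blast
qed

lemma H01_L2: assumes "H01 \<Omega> v g" shows "L2 v" "L2 g"
  using assms by (auto simp: H01_def)

lemma L2norm_lincomb_le:
  fixes f1 f2 :: "'a::euclidean_space \<Rightarrow> 'b::euclidean_space"
  assumes "L2 f1" "L2 f2"
  shows "L2norm (\<lambda>x. a *\<^sub>R f1 x + b *\<^sub>R f2 x) \<le> \<bar>a\<bar> * L2norm f1 + \<bar>b\<bar> * L2norm f2"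
  using L2norm_triangle[OF L2_scaleR[OF assms(1)] L2_scaleR[OF assms(2)]] by (simp add: L2norm_scaleR)

lemma tendsto_L2norm_lincomb:
  fixes f1 f2 :: "nat \<Rightarrow> 'a::euclidean_space \<Rightarrow> 'b::euclidean_space"
    and g1 g2 :: "'a \<Rightarrow> 'b" and a b :: real
  assumes "\<And>n. L2 (f1 n)" "\<And>n. L2 (f2 n)" "L2 g1" "L2 g2"
    and "(\<lambda>n. L2norm (\<lambda>x. f1 n x - g1 x)) \<longlonglongrightarrow> 0" "(\<lambda>n. L2norm (\<lambda>x. f2 n x - g2 x)) \<longlonglongrightarrow> 0"
  shows "(\<lambda>n. L2norm (\<lambda>x. (a *\<^sub>R f1 n x + b *\<^sub>R f2 n x) - (a *\<^sub>R g1 x + b *\<^sub>R g2 x))) \<longlonglongrightarrow> 0"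
proof (rule tendsto_sandwich[of "\<lambda>_. 0", OF _ _ tendsto_const])
  have "L2norm (\<lambda>x. (a *\<^sub>R f1 n x + b *\<^sub>R f2 n x) - (a *\<^sub>R g1 x + b *\<^sub>R g2 x))
      \<le> \<bar>a\<bar> * L2norm (\<lambda>x. f1 n x - g1 x) + \<bar>b\<bar> * L2norm (\<lambda>x. f2 n x - g2 x)" for n
    using L2norm_lincomb_le[OF L2_diff[OF assms(1,3)] L2_diff[OF assms(2,4)], where a = a and b = b]
    by (simp add: algebra_simps)
  thus "eventually (\<lambda>n. L2norm (\<lambda>x. (a *\<^sub>R f1 n x + b *\<^sub>R f2 n x) - (a *\<^sub>R g1 x + b *\<^sub>R g2 x))
      \<le> \<bar>a\<bar> * L2norm (\<lambda>x. f1 n x - g1 x) + \<bar>b\<bar> * L2norm (\<lambda>x. f2 n x - g2 x)) sequentially"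
    by simp
  show "(\<lambda>n. \<bar>a\<bar> * L2norm (\<lambda>x. f1 n x - g1 x) + \<bar>b\<bar> * L2norm (\<lambda>x. f2 n x - g2 x)) \<longlonglongrightarrow> 0"
    using tendsto_add[OF tendsto_mult_right_zero tendsto_mult_right_zero, OF assms(5,6)] by simp
qed (simp add: L2norm_nonneg)

lemma H01_lincomb:
  assumes A: "H01 \<Omega> v g" and B: "H01 \<Omega> w h"
  shows "H01 \<Omega> (\<lambda>x. a * v x + b * w x) (\<lambda>x. a *\<^sub>R g x + b *\<^sub>R h x)"
proof -
  obtain \<phi>1 G1 where 1: "\<And>n. C1c \<Omega> (\<phi>1 n) (G1 n)" "(\<lambda>n. L2norm (\<lambda>x. \<phi>1 n x - v x)) \<longlonglongrightarrow> 0"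
    "(\<lambda>n. L2norm (\<lambda>x. G1 n x - g x)) \<longlonglongrightarrow> 0" using A by (auto simp: H01_def)
  obtain \<phi>2 G2 where 2: "\<And>n. C1c \<Omega> (\<phi>2 n) (G2 n)" "(\<lambda>n. L2norm (\<lambda>x. \<phi>2 n x - w x)) \<longlonglongrightarrow> 0"
    "(\<lambda>n. L2norm (\<lambda>x. G2 n x - h x)) \<longlonglongrightarrow> 0" using B by (auto simp: H01_def)
  note L = H01_L2[OF A] H01_L2[OF B] C1c_L2[OF 1(1)] C1c_L2[OF 2(1)]
  have "\<forall>n. C1c \<Omega> (\<lambda>x. a * \<phi>1 n x + b * \<phi>2 n x) (\<lambda>x. a *\<^sub>R G1 n x + b *\<^sub>R G2 n x)"
    using C1c_lincomb[OF 1(1) 2(1)] by blast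
  moreover have "(\<lambda>n. L2norm (\<lambda>x. (a * \<phi>1 n x + b * \<phi>2 n x) - (a * v x + b * w x))) \<longlonglongrightarrow> 0"
    using tendsto_L2norm_lincomb[OF L(5,7,1,3) 1(2) 2(2), of a b] by simp
  moreover have "(\<lambda>n. L2norm (\<lambda>x. (a *\<^sub>R G1 n x + b *\<^sub>R G2 n x) - (a *\<^sub>R g x + b *\<^sub>R h x))) \<longlonglongrightarrow> 0"
    using tendsto_L2norm_lincomb[OF L(6,8,2,4) 1(3) 2(3)] .
  moreover have "L2 (\<lambda>x. a * v x + b * w x)" "L2 (\<lambda>x. a *\<^sub>R g x + b *\<^sub>R h x)"
    using L2_add[OF L2_scaleR L2_scaleR, OF L(1,3)] L2_add[OF L2_scaleR L2_scaleR, OF L(2,4)] by auto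
  ultimately show ?thesis
    unfolding H01_def
    by (intro conjI exI[of _ "\<lambda>n x. a * \<phi>1 n x + b * \<phi>2 n x"]
        exI[of _ "\<lambda>n x. a *\<^sub>R G1 n x + b *\<^sub>R G2 n x"]) auto
qed

lemma H01_diff:
  assumes "H01 \<Omega> v g" "H01 \<Omega> w h"
  shows "H01 \<Omega> (\<lambda>x. v x - w x) (\<lambda>x. g x - h x)"
  using H01_lincomb[OF assms, of 1 "-1"] by simp

lemma H01_gradient_vanishes_outside:
  assumes H: "H01 \<Omega> v g" and \<Omega>: "\<Omega> \<in> sets lebesgue"
  shows "AE x in lebesgue. x \<notin> \<Omega> \<longrightarrow> g x = 0"
proof -
  obtain \<phi> G where C: "\<And>n. C1c \<Omega> (\<phi> n) (G n)" and lim: "(\<lambda>n. L2norm (\<lambda>x. G n x - g x)) \<longlonglongrightarrow> 0"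
    using H by (auto simp: H01_def)
  have compl: "- \<Omega> \<in> sets lebesgue" using sets.compl_sets[OF \<Omega>] by (simp add: Compl_eq_Diff_UNIV)
  have "L2norm (\<lambda>x. indicator (- \<Omega>) x *\<^sub>R g x) \<le> L2norm (\<lambda>x. G n x - g x)" for n
  proof -
    have "G n x = 0" if "x \<notin> \<Omega>" for x
      using that C[of n] by (intro C1c_vanishes_outside_support(2)[OF C]) (auto simp: C1c_def)
    hence "(\<lambda>x. indicator (- \<Omega>) x *\<^sub>R g x) = (\<lambda>x. indicator (- \<Omega>) x *\<^sub>R (g x - G n x))"
      by (intro ext) (auto simp: indicator_def)
    hence "L2norm (\<lambda>x. indicator (- \<Omega>) x *\<^sub>R g x) = L2norm (\<lambda>x. indicator (- \<Omega>) x *\<^sub>R (g x - G n x))"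
      by simp
    also have "\<dots> \<le> L2norm (\<lambda>x. g x - G n x)"
      by (intro L2norm_indicator_le compl L2_diff H01_L2[OF H] C1c_L2[OF C])
    finally show ?thesis by (simp add: L2norm_minus_commute)
  qed
  hence "L2norm (\<lambda>x. indicator (- \<Omega>) x *\<^sub>R g x) \<le> 0"
    using tendsto_lowerbound[OF lim] by (simp add: always_eventually)
  hence "AE x in lebesgue. indicator (- \<Omega>) x *\<^sub>R g x = 0"
    by (intro AE_zero_if_L2norm_le_0 L2_indicator H01_L2[OF H] compl)
  thus ?thesis by eventually_elim (auto simp: indicator_def)
qed

lemma tendsto_L2norm_diagonal:
  fixes f g :: "nat \<Rightarrow> 'a::euclidean_space \<Rightarrow> 'b::euclidean_space"
  assumes "\<And>n. L2 (f n)" "\<And>n. L2 (g n)" "L2 h"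
    and "\<And>n. L2norm (\<lambda>x. f n x - g n x) < 1 / Suc n"
    and "(\<lambda>n. L2norm (\<lambda>x. g n x - h x)) \<longlonglongrightarrow> 0"
  shows "(\<lambda>n. L2norm (\<lambda>x. f n x - h x)) \<longlonglongrightarrow> 0"
proof (rule tendsto_sandwich[of "\<lambda>_. 0", OF _ _ tendsto_const])
  show "(\<lambda>n. 1 / real (Suc n) + L2norm (\<lambda>x. g n x - h x)) \<longlonglongrightarrow> 0"
    using tendsto_add_zero[OF LIMSEQ_Suc[OF lim_const_over_n[of 1]] assms(5)] by simp
  show "eventually (\<lambda>n. L2norm (\<lambda>x. f n x - h x) \<le> 1 / real (Suc n) + L2norm (\<lambda>x. g n x - h x)) sequentially"
  proof (intro always_eventually allI)
    fix n
    show "L2norm (\<lambda>x. f n x - h x) \<le> 1 / real (Suc n) + L2norm (\<lambda>x. g n x - h x)"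
      using L2norm_diff_triangle[OF assms(1,2,3), of n n] assms(4)[of n] by linarith
  qed
qed (simp add: L2norm_nonneg)

lemma H01_closed:
  fixes v :: "nat \<Rightarrow> 'a::euclidean_space \<Rightarrow> real"
  assumes H: "\<And>n. H01 \<Omega> (v n) (g n)" and L: "L2 v0" "L2 g0"
    and lim_v: "(\<lambda>n. L2norm (\<lambda>x. v n x - v0 x)) \<longlonglongrightarrow> 0"
    and lim_g: "(\<lambda>n. L2norm (\<lambda>x. g n x - g0 x)) \<longlonglongrightarrow> 0"
  shows "H01 \<Omega> v0 g0"
proof -
  have "\<exists>\<phi> G. C1c \<Omega> \<phi> G \<and> L2norm (\<lambda>x. \<phi> x - v n x) < 1 / Suc n \<and> L2norm (\<lambda>x. G x - g n x) < 1 / Suc n" for n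
  proof -
    obtain \<phi> G where C: "\<And>k. C1c \<Omega> (\<phi> k) (G k)" and "(\<lambda>k. L2norm (\<lambda>x. \<phi> k x - v n x)) \<longlonglongrightarrow> 0"
      "(\<lambda>k. L2norm (\<lambda>x. G k x - g n x)) \<longlonglongrightarrow> 0" using H[of n] by (auto simp: H01_def)
    hence "eventually (\<lambda>k. L2norm (\<lambda>x. \<phi> k x - v n x) < 1 / Suc n \<and> L2norm (\<lambda>x. G k x - g n x) < 1 / Suc n) sequentially"
      by (intro eventually_conj order_tendstoD) auto
    then obtain k where "L2norm (\<lambda>x. \<phi> k x - v n x) < 1 / Suc n \<and> L2norm (\<lambda>x. G k x - g n x) < 1 / Suc n"
      unfolding eventually_sequentially by blast
    thus ?thesis using C by blast
  qed
  then obtain \<phi> G where C: "\<And>n. C1c \<Omega> (\<phi> n) (G n)"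
    and close: "\<And>n. L2norm (\<lambda>x. \<phi> n x - v n x) < 1 / Suc n" "\<And>n. L2norm (\<lambda>x. G n x - g n x) < 1 / Suc n"
    by metis
  have "(\<lambda>n. L2norm (\<lambda>x. \<phi> n x - v0 x)) \<longlonglongrightarrow> 0" "(\<lambda>n. L2norm (\<lambda>x. G n x - g0 x)) \<longlonglongrightarrow> 0"
    using tendsto_L2norm_diagonal[OF C1c_L2(1)[OF C] H01_L2(1)[OF H] L(1) close(1) lim_v]
      tendsto_L2norm_diagonal[OF C1c_L2(2)[OF C] H01_L2(2)[OF H] L(2) close(2) lim_g] .
  thus ?thesis unfolding H01_def using L C by blast
qed

section \<open>The Poincare inequality\<close>

lemma square_interval_integral_le:
  fixes g :: "real \<Rightarrow> real"
  assumes L: "L > 0" and c: "continuous_on {0..L} g"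
  shows "(LBINT t. indicator {0..L} t *\<^sub>R g t)\<^sup>2 \<le> L * (LBINT t. indicator {0..L} t *\<^sub>R (g t)\<^sup>2)"
proof -
  define I where "I = (LBINT t. indicator {0..L} t *\<^sub>R g t)"
  define J where "J = (LBINT t. indicator {0..L} t *\<^sub>R (g t)\<^sup>2)"
  have integrable: "integrable lborel (\<lambda>t. indicator {0..L} t *\<^sub>R h t)" if "continuous_on {0..L} h" for h :: "real \<Rightarrow> real"
    using borel_integrable_atLeastAtMost'[OF that] by (simp add: set_integrable_def)
  have length: "(LBINT t. indicator {0..L} t :: real) = L"
    using L by (simp add: measure_lborel_Icc)
  define k where "k = I / L"
  have i0: "integrable lborel (\<lambda>t. indicator {0..L} t :: real)"
    using integrable[of "\<lambda>_. 1"] by simp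
  have "0 \<le> (LBINT t. indicator {0..L} t *\<^sub>R (g t - k)\<^sup>2)"
    by (intro integral_nonneg_AE) (auto simp: indicator_def)
  also have "\<dots> = (LBINT t. indicator {0..L} t *\<^sub>R (g t)\<^sup>2 - (2 * k) * (indicator {0..L} t *\<^sub>R g t)
                         + k\<^sup>2 * indicator {0..L} t)"
    by (intro Bochner_Integration.integral_cong refl) (simp add: power2_eq_square algebra_simps)
  also have "\<dots> = J - (2 * k) * I + k\<^sup>2 * L"
    using integrable[OF c] integrable[of "\<lambda>t. (g t)\<^sup>2"] i0 length c
    by (simp add: I_def J_def continuous_intros)
  also have "\<dots> = J - I\<^sup>2 / L" using L by (simp add: k_def power2_eq_square field_simps)
  finally show ?thesis using L by (simp add: I_def J_def field_simps)
qed

lemma C1c_line_integral: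
  fixes \<phi> :: "'a::euclidean_space \<Rightarrow> real"
  assumes C: "C1c \<Omega> \<phi> G" and L: "L \<ge> 0"
  shows "(LBINT t. indicator {0..L} t *\<^sub>R (G (x + t *\<^sub>R b) \<bullet> b)) = \<phi> (x + L *\<^sub>R b) - \<phi> x"
proof -
  have cont: "continuous_on {0..L} (\<lambda>t. G (x + t *\<^sub>R b) \<bullet> b)"
    by (intro continuous_intros continuous_on_compose2[OF C1c_continuous(2)[OF C]]) auto
  have "((\<lambda>t. \<phi> (x + t *\<^sub>R b)) has_vector_derivative G (x + t *\<^sub>R b) \<bullet> b) (at t within {0..L})" for t
  proof -
    have line: "((\<lambda>t. x + t *\<^sub>R b) has_derivative (\<lambda>s. s *\<^sub>R b)) (at t)"
      by (auto intro!: derivative_eq_intros)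
    have "(\<phi> has_derivative (\<lambda>h. G (x + t *\<^sub>R b) \<bullet> h)) (at (x + t *\<^sub>R b))"
      using C by (simp add: C1c_def)
    from diff_chain_at[OF line this]
    have "((\<lambda>t. \<phi> (x + t *\<^sub>R b)) has_derivative (\<lambda>s. s *\<^sub>R (G (x + t *\<^sub>R b) \<bullet> b))) (at t)"
      by (simp add: o_def)
    thus ?thesis by (simp add: has_vector_derivative_def has_derivative_at_withinI)
  qed
  from integral_FTC_atLeastAtMost[OF L this cont] show ?thesis by simp
qed

lemma C1c_square_le_line_integral:
  fixes \<phi> :: "'a::euclidean_space \<Rightarrow> real"
  assumes C: "C1c \<Omega> \<phi> G" and sub: "\<Omega> \<subseteq> ball 0 R" and R: "R > 0" and b: "norm b = 1"
  shows "(\<phi> x)\<^sup>2 \<le> 2 * R * (LBINT t. indicator {0..2*R} t *\<^sub>R (norm (G (x + t *\<^sub>R b)))\<^sup>2)"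
proof -
  have zero: "\<phi> y = 0" if "norm y \<ge> R" for y
    using that sub C by (intro C1c_vanishes_outside_support(1)[OF C]) (auto simp: C1c_def)
  have cont: "continuous_on {0..2*R} (\<lambda>t. G (x + t *\<^sub>R b))"
    by (intro continuous_intros continuous_on_compose2[OF C1c_continuous(2)[OF C]]) auto
  show ?thesis
  proof (cases "norm x < R")
    case False
    thus ?thesis using R zero[of x] by (auto intro!: integral_nonneg_AE simp: indicator_def)
  next
    case True
    \<comment> \<open>The ray from x in direction b leaves the ball of radius R before t = 2R.\<close>
    have "norm (x + (2*R) *\<^sub>R b) \<ge> R"
      using norm_triangle_ineq2[of "(2*R) *\<^sub>R b" "- x"] True R b by (simp add: add.commute)
    hence "(\<phi> x)\<^sup>2 = (LBINT t. indicator {0..2*R} t *\<^sub>R (G (x + t *\<^sub>R b) \<bullet> b))\<^sup>2"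
      using C1c_line_integral[OF C, of "2*R" x b] zero R by simp
    also have "\<dots> \<le> 2*R * (LBINT t. indicator {0..2*R} t *\<^sub>R (G (x + t *\<^sub>R b) \<bullet> b)\<^sup>2)"
      using R cont by (intro square_interval_integral_le continuous_intros) auto
    also have "\<dots> \<le> 2*R * (LBINT t. indicator {0..2*R} t *\<^sub>R (norm (G (x + t *\<^sub>R b)))\<^sup>2)"
    proof (intro mult_left_mono integral_mono)
      show "integrable lborel (\<lambda>t. indicator {0..2*R} t *\<^sub>R (G (x + t *\<^sub>R b) \<bullet> b)\<^sup>2)"
        "integrable lborel (\<lambda>t. indicator {0..2*R} t *\<^sub>R (norm (G (x + t *\<^sub>R b)))\<^sup>2)"
        using borel_integrable_atLeastAtMost'[OF continuous_on_power[OF continuous_on_inner[OF cont continuous_on_const]]]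
          borel_integrable_atLeastAtMost'[OF continuous_on_power[OF continuous_on_norm[OF cont]]]
        by (auto simp: set_integrable_def)
      fix t
      have "\<bar>G (x + t *\<^sub>R b) \<bullet> b\<bar> \<le> norm (G (x + t *\<^sub>R b))"
        using Cauchy_Schwarz_ineq2[of "G (x + t *\<^sub>R b)" b] b by simp
      hence "(G (x + t *\<^sub>R b) \<bullet> b)\<^sup>2 \<le> (norm (G (x + t *\<^sub>R b)))\<^sup>2"
        by (metis abs_ge_zero power2_abs power_mono)
      thus "indicator {0..2*R} t *\<^sub>R (G (x + t *\<^sub>R b) \<bullet> b)\<^sup>2
          \<le> indicator {0..2*R} t *\<^sub>R (norm (G (x + t *\<^sub>R b)))\<^sup>2"
        by (auto simp: indicator_def)
    qed (use R in auto)
    finally show ?thesis .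
  qed
qed

lemma nn_integral_lborel_translate:
  fixes f :: "'a::euclidean_space \<Rightarrow> ennreal"
  assumes "f \<in> borel_measurable borel"
  shows "(\<integral>\<^sup>+x. f (x + c) \<partial>lborel) = (\<integral>\<^sup>+x. f x \<partial>lborel)"
proof -
  have "(\<integral>\<^sup>+x. f x \<partial>lborel) = (\<integral>\<^sup>+x. f x \<partial>(distr lborel borel ((+) c)))"
    by (simp add: lborel_distr_plus)
  also have "\<dots> = (\<integral>\<^sup>+x. f (c + x) \<partial>lborel)"
    using assms by (intro nn_integral_distr) auto
  finally show ?thesis by (simp add: add.commute)
qed

lemma Poincare_C1c:
  fixes \<phi> :: "'a::euclidean_space \<Rightarrow> real"
  assumes C: "C1c \<Omega> \<phi> G" and sub: "\<Omega> \<subseteq> ball 0 R" and R: "R > 0"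
  shows "L2norm \<phi> \<le> 2 * R * L2norm G"
proof -
  obtain b :: 'a where b: "norm b = 1" using nonempty_Basis norm_Basis by blast
  define L where "L = 2 * R"
  have L: "L > 0" using R by (simp add: L_def)
  have [measurable]: "G \<in> borel_measurable borel"
    by (rule borel_measurable_continuous_onI[OF C1c_continuous(2)[OF C]])
  \<comment> \<open>Integrate the pointwise bound over x and swap the order of integration.\<close>
  define F where "F x t = ennreal (L * (indicator {0..L} t * (norm (G (x + t *\<^sub>R b)))\<^sup>2))" for x t
  have F_meas: "(\<lambda>(x, t). F x t) \<in> borel_measurable (lborel \<Otimes>\<^sub>M lborel)"
    unfolding F_def by measurable
  have pointwise: "ennreal ((norm (\<phi> x))\<^sup>2) \<le> (\<integral>\<^sup>+t. F x t \<partial>lborel)" for x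
  proof -
    have cont: "continuous_on {0..L} (\<lambda>t. (norm (G (x + t *\<^sub>R b)))\<^sup>2)"
      by (intro continuous_intros continuous_on_compose2[OF C1c_continuous(2)[OF C]]) auto
    have int: "integrable lborel (\<lambda>t. indicator {0..L} t *\<^sub>R (norm (G (x + t *\<^sub>R b)))\<^sup>2)"
      using borel_integrable_atLeastAtMost'[OF cont] by (simp add: set_integrable_def)
    have "ennreal ((norm (\<phi> x))\<^sup>2) \<le> ennreal L * ennreal (LBINT t. indicator {0..L} t *\<^sub>R (norm (G (x + t *\<^sub>R b)))\<^sup>2)"
      using C1c_square_le_line_integral[OF C sub R b, of x] L by (simp add: L_def ennreal_leI flip: ennreal_mult)
    also have "\<dots> = ennreal L * (\<integral>\<^sup>+t. ennreal (indicator {0..L} t *\<^sub>R (norm (G (x + t *\<^sub>R b)))\<^sup>2) \<partial>lborel)"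
      by (subst nn_integral_eq_integral[OF int]) (auto simp: indicator_def)
    also have "\<dots> = (\<integral>\<^sup>+t. F x t \<partial>lborel)"
      unfolding F_def using L by (subst nn_integral_cmult[symmetric]) (auto simp: ennreal_mult)
    finally show ?thesis .
  qed
  have inner: "(\<integral>\<^sup>+x. F x t \<partial>lborel) = ennreal (L * indicator {0..L} t) * ennreal (L2sq G)" for t
  proof -
    have "(\<integral>\<^sup>+x. F x t \<partial>lborel) = ennreal (L * indicator {0..L} t) * (\<integral>\<^sup>+x. ennreal ((norm (G (x + t *\<^sub>R b)))\<^sup>2) \<partial>lborel)"
      unfolding F_def using L
      by (subst nn_integral_cmult[symmetric]) (auto simp: ennreal_mult[symmetric] mult.assoc)
    also have "(\<integral>\<^sup>+x. ennreal ((norm (G (x + t *\<^sub>R b)))\<^sup>2) \<partial>lborel) = (\<integral>\<^sup>+x. ennreal ((norm (G x))\<^sup>2) \<partial>lebesgue)"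
      by (subst nn_integral_lborel_translate) (auto simp: nn_integral_completion)
    finally show ?thesis by (simp add: nn_integral_eq_L2sq[OF C1c_L2(2)[OF C]])
  qed
  have "ennreal (L2sq \<phi>) = (\<integral>\<^sup>+x. ennreal ((norm (\<phi> x))\<^sup>2) \<partial>lborel)"
    by (simp add: nn_integral_eq_L2sq[OF C1c_L2(1)[OF C], symmetric] nn_integral_completion)
  also have "\<dots> \<le> (\<integral>\<^sup>+x. (\<integral>\<^sup>+t. F x t \<partial>lborel) \<partial>lborel)"
    by (intro nn_integral_mono pointwise)
  also have "\<dots> = (\<integral>\<^sup>+t. (\<integral>\<^sup>+x. F x t \<partial>lborel) \<partial>lborel)"
    by (rule lborel_pair.Fubini'[OF F_meas, symmetric])
  also have "\<dots> = (\<integral>\<^sup>+t. (ennreal (L2sq G) * ennreal L) * indicator {0..L} t \<partial>lborel)"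
    unfolding inner using L by (intro nn_integral_cong) (auto simp: indicator_def ennreal_mult mult.commute)
  also have "\<dots> = ennreal (L\<^sup>2 * L2sq G)"
    using L L2sq_nonneg[of G]
    by (simp add: nn_integral_cmult_indicator emeasure_lborel_Icc power2_eq_square
        ennreal_mult[symmetric] mult.commute mult.left_commute)
  finally have "L2sq \<phi> \<le> L\<^sup>2 * L2sq G" using L L2sq_nonneg[of G] by (simp add: ennreal_le_iff)
  hence "sqrt (L2sq \<phi>) \<le> sqrt (L\<^sup>2 * L2sq G)" by (rule real_sqrt_le_mono)
  thus ?thesis using L by (simp add: L2norm_eq_sqrt_L2sq real_sqrt_mult L_def)
qed

lemma Poincare_H01:
  assumes H: "H01 \<Omega> v g" and sub: "\<Omega> \<subseteq> ball 0 R" and R: "R > 0"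
  shows "L2norm v \<le> 2 * R * L2norm g"
proof -
  obtain \<phi> G where C: "\<And>n. C1c \<Omega> (\<phi> n) (G n)" and lim: "(\<lambda>n. L2norm (\<lambda>x. \<phi> n x - v x)) \<longlonglongrightarrow> 0"
    "(\<lambda>n. L2norm (\<lambda>x. G n x - g x)) \<longlonglongrightarrow> 0" using H by (auto simp: H01_def)
  have bound: "L2norm v - 2 * R * L2norm g \<le> L2norm (\<lambda>x. \<phi> n x - v x) + 2 * R * L2norm (\<lambda>x. G n x - g x)" for n
  proof -
    have "L2norm (\<lambda>x. v x - 0) \<le> L2norm (\<lambda>x. v x - \<phi> n x) + L2norm (\<lambda>x. \<phi> n x - 0)"
      by (rule L2norm_diff_triangle[OF H01_L2(1)[OF H] C1c_L2(1)[OF C] L2_zero])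
    hence "L2norm v \<le> L2norm (\<lambda>x. \<phi> n x - v x) + L2norm (\<phi> n)"
      by (simp add: L2norm_minus_commute)
    moreover have "L2norm (\<lambda>x. G n x - 0) \<le> L2norm (\<lambda>x. G n x - g x) + L2norm (\<lambda>x. g x - 0)"
      by (rule L2norm_diff_triangle[OF C1c_L2(2)[OF C] H01_L2(2)[OF H] L2_zero])
    hence "2 * R * L2norm (G n) \<le> 2 * R * (L2norm (\<lambda>x. G n x - g x) + L2norm g)"
      using R by (intro mult_left_mono) auto
    ultimately show ?thesis using Poincare_C1c[OF C sub R, of n] by (simp add: algebra_simps)
  qed
  have "(\<lambda>n. L2norm (\<lambda>x. \<phi> n x - v x) + 2 * R * L2norm (\<lambda>x. G n x - g x)) \<longlonglongrightarrow> 0"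
    using tendsto_add[OF lim(1) tendsto_mult_right_zero[OF lim(2)]] by simp
  from tendsto_lowerbound[OF this always_eventually[OF allI[OF bound]]]
  show ?thesis by simp
qed

section \<open>Diffusion problems with piecewise constant coefficients\<close>

lemma set_integral_inner_diff_left:
  fixes f1 f2 g :: "'a::euclidean_space \<Rightarrow> 'b::euclidean_space"
  assumes "L2 f1" "L2 f2" "L2 g" "A \<in> sets lebesgue"
  shows "(LINT x:A|lebesgue. (f1 x - f2 x) \<bullet> g x) = (LINT x:A|lebesgue. f1 x \<bullet> g x) - (LINT x:A|lebesgue. f2 x \<bullet> g x)"
  using set_integral_diff(2)[OF set_integrable_inner_L2[OF assms(1,3,4)] set_integrable_inner_L2[OF assms(2,3,4)]]
  by (simp add: inner_diff_left)

lemma set_integral_inner_eq_0_if_AE: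
  assumes "AE x in lebesgue. x \<in> A \<longrightarrow> h x = 0"
  shows "(LINT x:A|lebesgue. (f x::'b::euclidean_space) \<bullet> h x) = 0"
  unfolding set_lebesgue_integral_def
  by (rule integral_eq_zero_AE) (use assms in \<open>auto simp: indicator_def elim!: AE_mp\<close>)

lemma integral_inner_eq_sum_set_integrals:
  fixes f g :: "'a::euclidean_space \<Rightarrow> 'b::euclidean_space"
  assumes sets: "\<And>j. j \<in> I \<Longrightarrow> Om j \<in> sets lebesgue"
    and disj: "\<And>i j. i \<in> I \<Longrightarrow> j \<in> I \<Longrightarrow> i \<noteq> j \<Longrightarrow> Om i \<inter> Om j = {}"
    and fin: "finite I" and cover: "\<Omega> - (\<Union>j\<in>I. Om j) \<in> null_sets lebesgue"
    and f: "L2 f" and g: "L2 g" and outside: "AE x in lebesgue. x \<notin> \<Omega> \<longrightarrow> f x = 0"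
  shows "(\<integral>x. f x \<bullet> g x \<partial>lebesgue) = (\<Sum>j\<in>I. LINT x:Om j|lebesgue. f x \<bullet> g x)"
proof -
  have integrable: "integrable lebesgue (\<lambda>x. indicator (Om j) x *\<^sub>R (f x \<bullet> g x))" if "j \<in> I" for j
    using set_integrable_inner_L2[OF f g sets[OF that]] by (simp add: set_integrable_def)
  have "AE x in lebesgue. f x \<bullet> g x = (\<Sum>j\<in>I. indicator (Om j) x *\<^sub>R (f x \<bullet> g x))"
    using AE_not_in[OF cover] outside
  proof eventually_elim
    case (elim x)
    show ?case
    proof (cases "\<exists>j\<in>I. x \<in> Om j")
      case True
      then obtain j0 where j0: "j0 \<in> I" "x \<in> Om j0" by blast
      have "(\<Sum>j\<in>I. indicator (Om j) x *\<^sub>R (f x \<bullet> g x)) = (\<Sum>j\<in>I. if j = j0 then f x \<bullet> g x else 0)"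
        using disj j0 by (intro sum.cong refl) (auto simp: indicator_def)
      thus ?thesis using fin j0(1) by simp
    next
      case False
      thus ?thesis using elim by auto
    qed
  qed
  hence "(\<integral>x. f x \<bullet> g x \<partial>lebesgue) = (\<integral>x. (\<Sum>j\<in>I. indicator (Om j) x *\<^sub>R (f x \<bullet> g x)) \<partial>lebesgue)"
    using integrable_inner_L2[OF f g] integrable
    by (intro integral_cong_AE borel_measurable_integrable Bochner_Integration.integrable_sum) auto
  also have "\<dots> = (\<Sum>j\<in>I. LINT x:Om j|lebesgue. f x \<bullet> g x)"
    using integrable by (simp add: set_lebesgue_integral_def)
  finally show ?thesis .
qed

locale piecewise_diffusion =
  fixes \<Omega> :: "'a::euclidean_space set" and Om :: "nat \<Rightarrow> 'a set" and I :: "nat set"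
    and F :: "('a \<Rightarrow> real) \<Rightarrow> real"
    and u :: "(nat \<Rightarrow> real) \<Rightarrow> 'a \<Rightarrow> real" and gu :: "(nat \<Rightarrow> real) \<Rightarrow> 'a \<Rightarrow> 'a"
  assumes finite_I: "finite I"
    and sets_\<Omega>: "\<Omega> \<in> sets lebesgue" and bounded_\<Omega>: "bounded \<Omega>"
    and sets_Om: "\<And>j. j \<in> I \<Longrightarrow> Om j \<in> sets lebesgue"
    and Om_disjoint: "\<And>i j. i \<in> I \<Longrightarrow> j \<in> I \<Longrightarrow> i \<noteq> j \<Longrightarrow> Om i \<inter> Om j = {}"
    and Om_cover: "\<Omega> - (\<Union>j\<in>I. Om j) \<in> null_sets lebesgue"
    and solution: "\<And>y. (\<forall>j\<in>I. y j > 0) \<Longrightarrow> H01 \<Omega> (u y) (gu y) \<and>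
         (\<forall>v h. H01 \<Omega> v h \<longrightarrow> (\<Sum>j\<in>I. y j * (LINT x:Om j|lebesgue. gu y x \<bullet> h x)) = F v)"
begin

definition form :: "(nat \<Rightarrow> real) \<Rightarrow> ('a \<Rightarrow> 'a) \<Rightarrow> ('a \<Rightarrow> 'a) \<Rightarrow> real" where
  "form y g h = (\<Sum>j\<in>I. y j * (LINT x:Om j|lebesgue. g x \<bullet> h x))"

lemma form_commute: "form y g h = form y h g"
  by (simp add: form_def inner_commute)

lemma form_diff_left:
  assumes "L2 f" "L2 g" "L2 h"
  shows "form y (\<lambda>x. f x - g x) h = form y f h - form y g h"
  using set_integral_inner_diff_left[OF assms sets_Om]
  by (simp add: form_def right_diff_distrib sum_subtractf)

lemma form_diff_right:
  assumes "L2 f" "L2 g" "L2 h"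
  shows "form y h (\<lambda>x. f x - g x) = form y h f - form y h g"
  using form_diff_left[OF assms] by (simp add: form_commute)

lemma form_nonneg:
  assumes "\<forall>j\<in>I. y j \<ge> 0" shows "form y g g \<ge> 0"
  unfolding form_def using assms by (auto intro!: sum_nonneg mult_nonneg_nonneg set_integral_inner_self_nonneg)

lemma form_mono:
  assumes "\<forall>j\<in>I. y j \<le> y' j" shows "form y g g \<le> form y' g g"
  unfolding form_def using assms set_integral_inner_self_nonneg by (intro sum_mono mult_right_mono) auto

lemma L2sq_le_form:
  assumes "\<forall>j\<in>I. m \<le> y j" and L: "L2 g" and outside: "AE x in lebesgue. x \<notin> \<Omega> \<longrightarrow> g x = 0"
  shows "m * L2sq g \<le> form y g g"
proof -
  have "m * L2sq g = (\<Sum>j\<in>I. m * (LINT x:Om j|lebesgue. g x \<bullet> g x))"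
    unfolding L2sq_eq_inner_integral
    by (simp add: integral_inner_eq_sum_set_integrals[OF sets_Om Om_disjoint finite_I Om_cover L L outside]
        sum_distrib_left)
  also have "\<dots> \<le> form y g g"
    unfolding form_def using assms(1) set_integral_inner_self_nonneg by (intro sum_mono mult_right_mono) auto
  finally show ?thesis .
qed

lemma form_bound:
  assumes "L2 g" "L2 h"
  shows "\<bar>form y g h\<bar> \<le> (\<Sum>j\<in>I. \<bar>y j\<bar>) * (L2norm g * L2norm h)"
proof -
  have "\<bar>form y g h\<bar> \<le> (\<Sum>j\<in>I. \<bar>y j\<bar> * \<bar>LINT x:Om j|lebesgue. g x \<bullet> h x\<bar>)"
    unfolding form_def by (rule order_trans[OF sum_abs]) (simp add: abs_mult)
  also have "\<dots> \<le> (\<Sum>j\<in>I. \<bar>y j\<bar> * (L2norm g * L2norm h))"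
    using set_integral_inner_bound[OF assms sets_Om] by (intro sum_mono mult_left_mono) auto
  finally show ?thesis by (simp add: sum_distrib_right)
qed

lemma form_cong_vanishing:
  assumes "\<forall>j\<in>I - T. y j = y' j" and "VS Om T h"
  shows "form y g h = form y' g h"
  unfolding form_def using assms by (intro sum.cong refl) (auto simp: VS_def set_integral_inner_eq_0_if_AE)

abbreviation positive :: "(nat \<Rightarrow> real) \<Rightarrow> bool" where
  "positive y \<equiv> \<forall>j\<in>I. y j > 0"

lemma H01_solution: "positive y \<Longrightarrow> H01 \<Omega> (u y) (gu y)"
  using solution by blast

lemma L2_gu: "positive y \<Longrightarrow> L2 (gu y)"
  using H01_L2(2)[OF H01_solution] .

lemma form_solution: "positive y \<Longrightarrow> H01 \<Omega> v h \<Longrightarrow> form y (gu y) h = F v"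
  using solution unfolding form_def by blast

lemma energy_eq: "positive y \<Longrightarrow> form y (gu y) (gu y) = F (u y)"
  using form_solution[OF _ H01_solution] .

lemma energy_term_le:
  assumes "positive y" "j \<in> I"
  shows "y j * (LINT x:Om j|lebesgue. gu y x \<bullet> gu y x) \<le> F (u y)"
proof -
  have "y j * (LINT x:Om j|lebesgue. gu y x \<bullet> gu y x) \<le> form y (gu y) (gu y)"
    unfolding form_def using assms
    by (intro member_le_sum finite_I mult_nonneg_nonneg set_integral_inner_self_nonneg) (auto simp: less_imp_le)
  thus ?thesis using energy_eq[OF assms(1)] by simp
qed

lemma form_diff_solutions_le:
  assumes y: "positive y" and y': "positive y'" and le: "\<forall>j\<in>I. y j \<le> y' j"
  shows "form y (\<lambda>x. gu y' x - gu y x) (\<lambda>x. gu y' x - gu y x) \<le> F (u y) - F (u y')"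
proof -
  note L = L2_gu[OF y'] L2_gu[OF y] L2_diff[OF L2_gu[OF y'] L2_gu[OF y]]
  have "form y (\<lambda>x. gu y' x - gu y x) (\<lambda>x. gu y' x - gu y x)
      = form y (gu y') (gu y') - 2 * form y (gu y) (gu y') + form y (gu y) (gu y)"
    by (simp add: form_diff_left[OF L(1,2,3)] form_diff_right[OF L(1,2,1)] form_diff_right[OF L(1,2,2)]
        form_commute[of y "gu y'" "gu y"])
  also have "\<dots> \<le> form y' (gu y') (gu y') - 2 * form y (gu y) (gu y') + form y (gu y) (gu y)"
    using form_mono[OF le] by simp
  also have "\<dots> = F (u y) - F (u y')"
    using energy_eq[OF y] energy_eq[OF y'] form_solution[OF y H01_solution[OF y']] by simp
  finally show ?thesis .
qed

end

section \<open>Letting the coefficients on S tend to infinity\<close>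

locale piecewise_diffusion_limit = piecewise_diffusion +
  fixes S :: "nat set" and ys :: "nat \<Rightarrow> real"
  assumes S_subset: "S \<subseteq> I" and ys_pos: "\<forall>j\<in>I - S. ys j > 0"
begin

definition admissible :: "real \<Rightarrow> (nat \<Rightarrow> real) \<Rightarrow> bool" where
  "admissible M y \<longleftrightarrow> (\<forall>j\<in>I - S. y j = ys j) \<and> (\<forall>j\<in>S. y j > M)"

lemma positive_if_admissible: "admissible M y \<Longrightarrow> M \<ge> 0 \<Longrightarrow> positive y"
  using ys_pos unfolding admissible_def by force

lemma admissible_mono: "admissible M y \<Longrightarrow> M' \<le> M \<Longrightarrow> admissible M' y"
  by (auto simp: admissible_def)

definition yseq :: "nat \<Rightarrow> nat \<Rightarrow> real" where
  "yseq n = (\<lambda>j. if j \<in> S then real n + 1 else ys j)"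

lemma admissible_yseq: "M \<le> real n \<Longrightarrow> admissible M (yseq n)"
  by (auto simp: admissible_def yseq_def)

lemma positive_yseq: "positive (yseq n)"
  using positive_if_admissible[OF admissible_yseq[of 0 n]] by simp

definition coeff_min :: real where
  "coeff_min = Min (insert 1 (ys ` (I - S)))"

lemma coeff_min_pos: "coeff_min > 0"
  unfolding coeff_min_def using ys_pos finite_I by (subst Min_gr_iff) auto

lemma coeff_min_le:
  assumes "admissible 1 y" "j \<in> I" shows "coeff_min \<le> y j"
proof (cases "j \<in> S")
  case True
  have "coeff_min \<le> 1" unfolding coeff_min_def using finite_I by (intro Min_le) auto
  thus ?thesis using True assms(1) by (auto simp: admissible_def)
next
  case False
  hence "coeff_min \<le> ys j" unfolding coeff_min_def using finite_I assms(2) by (intro Min_le) auto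
  thus ?thesis using False assms by (auto simp: admissible_def)
qed

lemma energy_almost_minimal:
  assumes "\<delta> > 0"
  shows "\<exists>y0. admissible 1 y0 \<and> (\<forall>y. admissible 1 y \<longrightarrow> F (u y0) < F (u y) + \<delta>)"
proof -
  define E where "E = (\<lambda>y. F (u y)) ` {y. admissible 1 y}"
  have "yseq 1 \<in> {y. admissible 1 y}" by (simp add: admissible_yseq)
  hence nonempty: "E \<noteq> {}" by (auto simp: E_def)
  have "F (u y) \<ge> 0" if "admissible 1 y" for y
    using positive_if_admissible[OF that] energy_eq form_nonneg by (metis less_imp_le zero_le_one)
  hence bdd: "bdd_below E" unfolding E_def by (intro bdd_belowI[of _ 0]) auto
  obtain e where "e \<in> E" "e < Inf E + \<delta>"
    using cInf_less_iff[OF nonempty bdd, of "Inf E + \<delta>"] assms by auto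
  moreover have "Inf E \<le> F (u y)" if "admissible 1 y" for y
    using that by (intro cInf_lower[OF _ bdd]) (auto simp: E_def)
  ultimately show ?thesis unfolding E_def by force
qed

lemma gradient_Cauchy:
  assumes e: "e > 0"
  shows "\<exists>M\<ge>1. \<exists>y0. admissible 1 y0 \<and> (\<forall>y. admissible M y \<longrightarrow> L2norm (\<lambda>x. gu y x - gu y0 x) \<le> e)"
proof -
  obtain y0 where y0: "admissible 1 y0" and almost_min: "\<And>y. admissible 1 y \<Longrightarrow> F (u y0) < F (u y) + coeff_min * e\<^sup>2"
    using energy_almost_minimal[of "coeff_min * e\<^sup>2"] coeff_min_pos e by auto
  define M where "M = max 1 (Max (y0 ` S))"
  have M: "M \<ge> 1" by (simp add: M_def)
  have "L2norm (\<lambda>x. gu y x - gu y0 x) \<le> e" if y: "admissible M y" for y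
  proof -
    have pos: "positive y" "positive y0"
      using positive_if_admissible[OF y] positive_if_admissible[OF y0] M by auto
    have le: "\<forall>j\<in>I. y0 j \<le> y j"
    proof
      fix j assume j: "j \<in> I"
      show "y0 j \<le> y j"
      proof (cases "j \<in> S")
        case True
        hence "y0 j \<le> Max (y0 ` S)" using finite_subset[OF S_subset finite_I] by (intro Max_ge) auto
        hence "y0 j \<le> M" by (simp add: M_def)
        thus ?thesis using y True by (auto simp: admissible_def)
      qed (use y y0 j in \<open>auto simp: admissible_def\<close>)
    qed
    have D: "H01 \<Omega> (\<lambda>x. u y x - u y0 x) (\<lambda>x. gu y x - gu y0 x)"
      by (intro H01_diff H01_solution pos)
    have "coeff_min * L2sq (\<lambda>x. gu y x - gu y0 x) \<le> form y0 (\<lambda>x. gu y x - gu y0 x) (\<lambda>x. gu y x - gu y0 x)"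
      using coeff_min_le[OF y0] by (intro L2sq_le_form H01_L2(2)[OF D] H01_gradient_vanishes_outside[OF D sets_\<Omega>]) auto
    also have "\<dots> \<le> F (u y0) - F (u y)" by (rule form_diff_solutions_le[OF pos(2,1) le])
    also have "\<dots> < coeff_min * e\<^sup>2" using almost_min[OF admissible_mono[OF y M]] by simp
    finally have "L2sq (\<lambda>x. gu y x - gu y0 x) \<le> e\<^sup>2" using coeff_min_pos by simp
    thus ?thesis using e unfolding L2norm_eq_sqrt_L2sq by (intro real_le_lsqrt) auto
  qed
  thus ?thesis using M y0 by blast
qed

lemma eventually_admissible_yseq: "eventually (\<lambda>n. admissible M (yseq n)) sequentially"
proof -
  obtain N :: nat where "M \<le> real N" using real_arch_simple by blast
  thus ?thesis unfolding eventually_sequentially by (intro exI[of _ N] allI impI admissible_yseq) auto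
qed

lemma limit_along_admissible:
  fixes f :: "(nat \<Rightarrow> real) \<Rightarrow> 'a \<Rightarrow> 'b::euclidean_space"
  assumes L: "\<And>y. positive y \<Longrightarrow> L2 (f y)"
    and Cauchy: "\<And>e. e > 0 \<Longrightarrow> \<exists>M\<ge>1. \<exists>y0. positive y0 \<and> (\<forall>y. admissible M y \<longrightarrow> L2norm (\<lambda>x. f y x - f y0 x) \<le> e)"
  shows "\<exists>g. L2 g \<and> (\<lambda>n. L2norm (\<lambda>x. f (yseq n) x - g x)) \<longlonglongrightarrow> 0 \<and>
           (\<forall>e>0. \<exists>M>0. \<forall>y. admissible M y \<longrightarrow> L2norm (\<lambda>x. f y x - g x) < e)"
proof -
  have Lseq: "L2 (f (yseq n))" for n by (rule L[OF positive_yseq])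
  have "\<exists>N. \<forall>m\<ge>N. \<forall>n\<ge>N. L2norm (\<lambda>x. f (yseq m) x - f (yseq n) x) < e" if e: "e > 0" for e
  proof -
    obtain M y0 where y0: "positive y0" and close: "\<And>y. admissible M y \<Longrightarrow> L2norm (\<lambda>x. f y x - f y0 x) \<le> e / 4"
      using Cauchy[of "e/4"] e by auto
    obtain N where N: "\<And>n. n \<ge> N \<Longrightarrow> admissible M (yseq n)"
      using eventually_admissible_yseq[of M] unfolding eventually_sequentially by blast
    have "L2norm (\<lambda>x. f (yseq m) x - f (yseq n) x) < e" if "m \<ge> N" "n \<ge> N" for m n
      using L2norm_diff_triangle[OF Lseq L[OF y0] Lseq, of m n] L2norm_minus_commute[of "f y0" "f (yseq n)"]
        close[OF N[OF that(1)]] close[OF N[OF that(2)]] e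
      by linarith
    thus ?thesis by blast
  qed
  from L2_complete[of "\<lambda>n. f (yseq n)", OF Lseq this]
  obtain g where g: "L2 g" and lim: "(\<lambda>n. L2norm (\<lambda>x. f (yseq n) x - g x)) \<longlonglongrightarrow> 0"
    by blast
  have "\<exists>M>0. \<forall>y. admissible M y \<longrightarrow> L2norm (\<lambda>x. f y x - g x) < e" if e: "e > 0" for e
  proof -
    obtain M y0 where M: "M \<ge> 1" and y0: "positive y0"
      and close: "\<And>y. admissible M y \<Longrightarrow> L2norm (\<lambda>x. f y x - f y0 x) \<le> e / 3"
      using Cauchy[of "e/3"] e by auto
    have "eventually (\<lambda>n. L2norm (\<lambda>x. f y0 x - g x) \<le> e/3 + L2norm (\<lambda>x. f (yseq n) x - g x)) sequentially"
      using eventually_admissible_yseq[of M]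
    proof eventually_elim
      case (elim n)
      thus ?case using L2norm_diff_triangle[OF L[OF y0] Lseq g, of n] close[OF elim]
          L2norm_minus_commute[of "f y0" "f (yseq n)"]
        by linarith
    qed
    moreover have "(\<lambda>n. e/3 + L2norm (\<lambda>x. f (yseq n) x - g x)) \<longlonglongrightarrow> e/3"
      using tendsto_add[OF tendsto_const lim] by simp
    ultimately have y0_close: "L2norm (\<lambda>x. f y0 x - g x) \<le> e/3"
      using tendsto_le[OF trivial_limit_sequentially _ tendsto_const] by blast
    have "L2norm (\<lambda>x. f y x - g x) < e" if y: "admissible M y" for y
    proof -
      have "positive y" using positive_if_admissible[OF y] M by simp
      thus ?thesis using L2norm_diff_triangle[OF L L[OF y0] g, of y] close[OF y] y0_close e by linarith
    qed
    thus ?thesis using M by (intro exI[of _ M]) auto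
  qed
  with g lim show ?thesis by blast
qed

lemma gradient_limit:
  "\<exists>g. L2 g \<and> (\<lambda>n. L2norm (\<lambda>x. gu (yseq n) x - g x)) \<longlonglongrightarrow> 0 \<and>
     (\<forall>e>0. \<exists>M>0. \<forall>y. admissible M y \<longrightarrow> L2norm (\<lambda>x. gu y x - g x) < e)"
proof (rule limit_along_admissible[OF L2_gu])
  fix e :: real assume "e > 0"
  then obtain M y0 where "M \<ge> 1" "admissible 1 y0"
    "\<forall>y. admissible M y \<longrightarrow> L2norm (\<lambda>x. gu y x - gu y0 x) \<le> e"
    using gradient_Cauchy by blast
  moreover have "positive y0" using positive_if_admissible[OF \<open>admissible 1 y0\<close>] by simp
  ultimately show "\<exists>M\<ge>1. \<exists>y0. positive y0 \<and> (\<forall>y. admissible M y \<longrightarrow> L2norm (\<lambda>x. gu y x - gu y0 x) \<le> e)"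
    by blast
qed

lemma solution_limit:
  "\<exists>v. L2 v \<and> (\<lambda>n. L2norm (\<lambda>x. u (yseq n) x - v x)) \<longlonglongrightarrow> 0"
proof -
  obtain R where R: "R > 0" "\<Omega> \<subseteq> ball 0 R" using bounded_subset_ballD[OF bounded_\<Omega>] by blast
  have "\<exists>M\<ge>1. \<exists>y0. positive y0 \<and> (\<forall>y. admissible M y \<longrightarrow> L2norm (\<lambda>x. u y x - u y0 x) \<le> e)"
    if e: "e > 0" for e
  proof -
    obtain M y0 where M: "M \<ge> 1" and y0: "admissible 1 y0"
      and close: "\<And>y. admissible M y \<Longrightarrow> L2norm (\<lambda>x. gu y x - gu y0 x) \<le> e / (2 * R)"
      using gradient_Cauchy[of "e / (2 * R)"] e R(1) by auto
    have "L2norm (\<lambda>x. u y x - u y0 x) \<le> e" if y: "admissible M y" for y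
    proof -
      have "positive y" "positive y0" using positive_if_admissible[OF y] positive_if_admissible[OF y0] M by auto
      hence "L2norm (\<lambda>x. u y x - u y0 x) \<le> 2 * R * L2norm (\<lambda>x. gu y x - gu y0 x)"
        by (intro Poincare_H01[OF H01_diff R(2) R(1)] H01_solution)
      also have "\<dots> \<le> 2 * R * (e / (2 * R))" using close[OF y] R(1) by (intro mult_left_mono) auto
      finally show ?thesis using R(1) by simp
    qed
    moreover have "positive y0" using positive_if_admissible[OF y0] by simp
    ultimately show ?thesis using M by blast
  qed
  from limit_along_admissible[OF H01_L2(1)[OF H01_solution] this] show ?thesis by blast
qed

lemma energy_yseq_le: "F (u (yseq n)) \<le> F (u (yseq 0))"
proof -
  have "0 \<le> form (yseq 0) (\<lambda>x. gu (yseq n) x - gu (yseq 0) x) (\<lambda>x. gu (yseq n) x - gu (yseq 0) x)"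
    using positive_yseq[of 0] by (intro form_nonneg) (auto simp: less_imp_le)
  also have "\<dots> \<le> F (u (yseq 0)) - F (u (yseq n))"
    by (rule form_diff_solutions_le[OF positive_yseq positive_yseq]) (auto simp: yseq_def)
  finally show ?thesis by simp
qed

text \<open>On the subdomains in S the gradients are penalised by the coefficient n + 1 at a bounded
  energy cost, so their limit vanishes there.\<close>
lemma gradient_limit_vanishes_on_S:
  assumes g: "L2 g" and lim: "(\<lambda>n. L2norm (\<lambda>x. gu (yseq n) x - g x)) \<longlonglongrightarrow> 0" and j: "j \<in> S"
  shows "AE x in lebesgue. x \<in> Om j \<longrightarrow> g x = 0"
proof -
  have Om: "Om j \<in> sets lebesgue" using j S_subset sets_Om by auto
  let ?E = "F (u (yseq 0))"
  have bound: "L2norm (\<lambda>x. indicator (Om j) x *\<^sub>R g x)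
      \<le> L2norm (\<lambda>x. gu (yseq n) x - g x) + sqrt (?E / real (Suc n))" for n
  proof -
    have "(real n + 1) * (LINT x:Om j|lebesgue. gu (yseq n) x \<bullet> gu (yseq n) x) \<le> ?E"
      using energy_term_le[OF positive_yseq, of j n] energy_yseq_le[of n] j S_subset
      by (auto simp: yseq_def)
    hence "L2sq (\<lambda>x. indicator (Om j) x *\<^sub>R gu (yseq n) x) \<le> ?E / real (Suc n)"
      by (simp add: L2sq_indicator field_simps)
    hence penalised: "L2norm (\<lambda>x. indicator (Om j) x *\<^sub>R gu (yseq n) x) \<le> sqrt (?E / real (Suc n))"
      by (simp add: L2norm_eq_sqrt_L2sq)
    have "L2norm (\<lambda>x. indicator (Om j) x *\<^sub>R (g x - gu (yseq n) x) + indicator (Om j) x *\<^sub>R gu (yseq n) x)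
        \<le> L2norm (\<lambda>x. indicator (Om j) x *\<^sub>R (g x - gu (yseq n) x)) + L2norm (\<lambda>x. indicator (Om j) x *\<^sub>R gu (yseq n) x)"
      by (intro L2norm_triangle L2_indicator L2_diff g L2_gu positive_yseq Om)
    moreover have "L2norm (\<lambda>x. indicator (Om j) x *\<^sub>R (g x - gu (yseq n) x)) \<le> L2norm (\<lambda>x. gu (yseq n) x - g x)"
      using L2norm_indicator_le[OF L2_diff[OF g L2_gu[OF positive_yseq]] Om] by (simp add: L2norm_minus_commute)
    ultimately show ?thesis using penalised by (simp add: algebra_simps)
  qed
  have "(\<lambda>n. sqrt (?E / real (Suc n))) \<longlonglongrightarrow> sqrt 0"
    by (intro tendsto_real_sqrt LIMSEQ_Suc[OF lim_const_over_n])
  hence "(\<lambda>n. L2norm (\<lambda>x. gu (yseq n) x - g x) + sqrt (?E / real (Suc n))) \<longlonglongrightarrow> 0"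
    using tendsto_add[OF lim] by simp
  from tendsto_lowerbound[OF this always_eventually[OF allI[OF bound]]]
  have "L2norm (\<lambda>x. indicator (Om j) x *\<^sub>R g x) \<le> 0" by simp
  hence "AE x in lebesgue. indicator (Om j) x *\<^sub>R g x = 0"
    by (rule AE_zero_if_L2norm_le_0[OF L2_indicator[OF g Om]])
  thus ?thesis by eventually_elim (auto simp: indicator_def)
qed

definition ylim :: "nat \<Rightarrow> real" where
  "ylim = (\<lambda>j. if j \<in> S then 0 else ys j)"

lemma form_ylim: "form ylim g h = (\<Sum>j\<in>I - S. ys j * (LINT x:Om j|lebesgue. g x \<bullet> h x))"
  unfolding form_def ylim_def
  by (simp add: sum.subset_diff[OF S_subset finite_I] sum.neutral)

lemma limit_equation:
  assumes g: "L2 g" and lim: "(\<lambda>n. L2norm (\<lambda>x. gu (yseq n) x - g x)) \<longlonglongrightarrow> 0"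
    and vh: "H01 \<Omega> v h" "VS Om S h"
  shows "form ylim g h = F v"
proof -
  define C where "C = (\<Sum>j\<in>I. \<bar>ylim j\<bar>) * L2norm h"
  have "\<bar>form ylim g h - F v\<bar> \<le> C * L2norm (\<lambda>x. gu (yseq n) x - g x)" for n
  proof -
    have "F v = form ylim (gu (yseq n)) h"
      using form_solution[OF positive_yseq vh(1)] form_cong_vanishing[OF _ vh(2)]
      by (metis Diff_iff ylim_def yseq_def)
    hence "form ylim g h - F v = form ylim (\<lambda>x. g x - gu (yseq n) x) h"
      by (simp add: form_diff_left[OF g L2_gu[OF positive_yseq] H01_L2(2)[OF vh(1)]])
    also have "\<bar>\<dots>\<bar> \<le> C * L2norm (\<lambda>x. g x - gu (yseq n) x)"
      using form_bound[OF L2_diff[OF g L2_gu[OF positive_yseq]] H01_L2(2)[OF vh(1)]]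
      by (simp add: C_def algebra_simps)
    finally show ?thesis by (simp add: L2norm_minus_commute)
  qed
  moreover have "(\<lambda>n. C * L2norm (\<lambda>x. gu (yseq n) x - g x)) \<longlonglongrightarrow> 0"
    using tendsto_mult_right_zero[OF lim] .
  ultimately have "\<bar>form ylim g h - F v\<bar> \<le> 0"
    by (intro tendsto_lowerbound[OF _ always_eventually]) auto
  thus ?thesis by simp
qed

lemma limit_solution_unique:
  assumes H: "H01 \<Omega> w k" "VS Om S k" "H01 \<Omega> w' k'" "VS Om S k'"
    and eq: "\<And>v h. H01 \<Omega> v h \<Longrightarrow> VS Om S h \<Longrightarrow> form ylim k h = F v"
    and eq': "\<And>v h. H01 \<Omega> v h \<Longrightarrow> VS Om S h \<Longrightarrow> form ylim k' h = F v"
  shows "L2norm (\<lambda>x. k x - k' x) = 0"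
proof -
  let ?D = "\<lambda>x. k x - k' x"
  have HD: "H01 \<Omega> (\<lambda>x. w x - w' x) ?D" by (rule H01_diff[OF H(1,3)])
  have VD: "VS Om S ?D"
    unfolding VS_def
  proof
    fix j assume "j \<in> S"
    with H(2,4) have "AE x in lebesgue. x \<in> Om j \<longrightarrow> k x = 0" "AE x in lebesgue. x \<in> Om j \<longrightarrow> k' x = 0"
      by (auto simp: VS_def)
    thus "AE x in lebesgue. x \<in> Om j \<longrightarrow> k x - k' x = 0" by eventually_elim simp
  qed
  have "form ylim ?D ?D = 0"
    using form_diff_left[OF H01_L2(2)[OF H(1)] H01_L2(2)[OF H(3)] H01_L2(2)[OF HD]] eq[OF HD VD] eq'[OF HD VD]
    by simp
  moreover have "form (yseq 1) ?D ?D = form ylim ?D ?D"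
    by (rule form_cong_vanishing[OF _ VD]) (simp add: ylim_def yseq_def)
  moreover have "coeff_min * L2sq ?D \<le> form (yseq 1) ?D ?D"
    using coeff_min_le[OF admissible_yseq[of 1 1]]
    by (intro L2sq_le_form H01_L2(2)[OF HD] H01_gradient_vanishes_outside[OF HD sets_\<Omega>]) auto
  ultimately have "L2sq ?D \<le> 0" using coeff_min_pos by (simp add: mult_le_0_iff)
  thus ?thesis using L2sq_nonneg[of ?D] by (simp add: L2norm_eq_sqrt_L2sq)
qed

theorem limit_problem:
  "\<exists>uS gS. H01 \<Omega> uS gS \<and> VS Om S gS \<and>
     (\<forall>v h. H01 \<Omega> v h \<and> VS Om S h \<longrightarrow> form ylim gS h = F v) \<and>
     (\<forall>w k. H01 \<Omega> w k \<and> VS Om S k \<and> (\<forall>v h. H01 \<Omega> v h \<and> VS Om S h \<longrightarrow> form ylim k h = F v)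
        \<longrightarrow> L2norm (\<lambda>x. k x - gS x) = 0) \<and>
     (\<forall>e>0. \<exists>M>0. \<forall>y. admissible M y \<longrightarrow> L2norm (\<lambda>x. gu y x - gS x) < e)"
proof -
  obtain gS where gS: "L2 gS" "(\<lambda>n. L2norm (\<lambda>x. gu (yseq n) x - gS x)) \<longlonglongrightarrow> 0"
    "\<forall>e>0. \<exists>M>0. \<forall>y. admissible M y \<longrightarrow> L2norm (\<lambda>x. gu y x - gS x) < e"
    using gradient_limit by blast
  obtain uS where uS: "L2 uS" "(\<lambda>n. L2norm (\<lambda>x. u (yseq n) x - uS x)) \<longlonglongrightarrow> 0"
    using solution_limit by blast
  have H: "H01 \<Omega> uS gS" by (rule H01_closed[OF H01_solution[OF positive_yseq] uS(1) gS(1) uS(2) gS(2)])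
  have V: "VS Om S gS" unfolding VS_def using gradient_limit_vanishes_on_S[OF gS(1,2)] by blast
  have eq: "form ylim gS h = F v" if "H01 \<Omega> v h" "VS Om S h" for v h
    by (rule limit_equation[OF gS(1,2) that])
  show ?thesis
    using H V eq limit_solution_unique[OF _ _ H V _ eq] gS(3) by blast
qed

end

theorem mainTheorem1:
  fixes \<Omega> :: "'a::euclidean_space set" and Om :: "nat \<Rightarrow> 'a set" and d :: nat
    and F :: "('a \<Rightarrow> real) \<Rightarrow> real"
    and u :: "(nat \<Rightarrow> real) \<Rightarrow> 'a \<Rightarrow> real" and gu :: "(nat \<Rightarrow> real) \<Rightarrow> 'a \<Rightarrow> 'a"
    and S :: "nat set" and ys :: "nat \<Rightarrow> real"
  assumes "open \<Omega>" and "bounded \<Omega>"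
    and "\<And>j. j \<in> {1..d} \<Longrightarrow> open (Om j) \<and> Om j \<subseteq> \<Omega>"
    and "\<And>i j. i \<in> {1..d} \<Longrightarrow> j \<in> {1..d} \<Longrightarrow> i \<noteq> j \<Longrightarrow> Om i \<inter> Om j = {}"
    and "closure \<Omega> \<subseteq> (\<Union>j\<in>{1..d}. closure (Om j))"
    and "\<Omega> - (\<Union>j\<in>{1..d}. Om j) \<in> null_sets lebesgue"
    and "Hminus1 \<Omega> F"
    and u_sol: "\<And>y. (\<forall>j\<in>{1..d}. y j > 0) \<Longrightarrow> H01 \<Omega> (u y) (gu y) \<and>
         (\<forall>v h. H01 \<Omega> v h \<longrightarrow>
            (\<Sum>j\<in>{1..d}. y j * (LINT x:Om j|lebesgue. gu y x \<bullet> h x)) = F v)"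
    and "S \<subseteq> {1..d}"
    and "\<forall>j\<in>{1..d} - S. ys j > 0"
  shows "\<exists>uS gS. H01 \<Omega> uS gS \<and> VS Om S gS \<and>
     (\<forall>v h. H01 \<Omega> v h \<and> VS Om S h \<longrightarrow>
        (\<Sum>j\<in>{1..d} - S. ys j * (LINT x:Om j|lebesgue. gS x \<bullet> h x)) = F v) \<and>
     (\<forall>w k. H01 \<Omega> w k \<and> VS Om S k \<and>
        (\<forall>v h. H01 \<Omega> v h \<and> VS Om S h \<longrightarrow>
           (\<Sum>j\<in>{1..d} - S. ys j * (LINT x:Om j|lebesgue. k x \<bullet> h x)) = F v)
        \<longrightarrow> L2norm (\<lambda>x. k x - gS x) = 0) \<and>
     (\<forall>\<epsilon>>0. \<exists>M>0. \<forall>y. (\<forall>j\<in>{1..d} - S. y j = ys j) \<and> (\<forall>j\<in>S. y j > M) \<longrightarrow>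
        L2norm (\<lambda>x. gu y x - gS x) < \<epsilon>)"
proof -
  interpret piecewise_diffusion_limit \<Omega> Om "{1..d}" F u gu S ys
    using assms by unfold_locales auto
  show ?thesis
    using limit_problem unfolding form_ylim admissible_def by blast
qed

end
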